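(* Let $n\ge0$. The homomorphism of filtered algebras $$\mathcal U(\mathrm{sl}_2)/(C-n(n+2))\longrightarrow\mathcal D(\mathcal O_n),\qquad e\mapsto x,\quad h\mapsto 2x\frac{d}{dx}-n,\quad f\mapsto -x\frac{d^2}{dx^2}+n\frac{d}{dx},$$ is surjective, and its kernel is the two-sided ideal generated by (the image of) $e^{n+1}$.
   Context: $k$ is a field of characteristic zero, $\mathcal O_n=k[x]/(x^{n+1})$, $x$ acts by multiplication and $\frac d{dx}$ by $x^m\mapsto mx^{m-1}$. $\mathcal D(\mathcal O_n)=\bigcup_p\mathcal D^p(\mathcal O_n)$ with $\mathcal D^p(\mathcal O_n)=\{\delta\in\operatorname{End}_k(\mathcal O_n):[f_0,[f_1,\dots,[f_p,\delta]\dots]]=0\ \forall f_i\in\mathcal O_n\}$ (order filtration). $\mathrm{sl}_2$ has basis $e,h,f$ with $[e,f]=h$, $[h,e]=2e$, $[h,f]=-2f$; $C=h^2+2(ef+fe)$ is the Casimir element. $\mathcal U(\mathrm{sl}_2)$ and its quotient are filtered by the filtration induced from the Lie algebra filtration $\langle e\rangle\subset\langle e,h\rangle\subset\langle e,h,f\rangle$, i.e. $e,h,f$ have orders $0,1,2$ respectively. *)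

theory Defs
  imports "HOL-Computational_Algebra.Polynomial"
begin

text \<open>O_n is realised as the polynomials of degree at most n; the product is
  the polynomial product reduced modulo x^(n+1).\<close>

definition On :: "nat \<Rightarrow> 'k::field poly set" where
  "On n = {p. degree p \<le> n}"

definition omult :: "nat \<Rightarrow> 'k::field poly \<Rightarrow> 'k poly \<Rightarrow> 'k poly" where
  "omult n p q = (p * q) mod monom 1 (Suc n)"

text \<open>k-linear endomorphisms of O_n, represented as functions on polynomials that are
  zero outside O_n (so that equality of endomorphisms is equality of functions).\<close>

definition is_End :: "nat \<Rightarrow> ('k::field poly \<Rightarrow> 'k poly) \<Rightarrow> bool" where
  "is_End n \<delta> \<longleftrightarrow>
     (\<forall>p\<in>On n. \<delta> p \<in> On n) \<and>
     (\<forall>p\<in>On n. \<forall>q\<in>On n. \<delta> (p + q) = \<delta> p + \<delta> q) \<and>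
     (\<forall>c. \<forall>p\<in>On n. \<delta> (smult c p) = smult c (\<delta> p)) \<and>
     (\<forall>p. p \<notin> On n \<longrightarrow> \<delta> p = 0)"

definition restr :: "nat \<Rightarrow> ('k::field poly \<Rightarrow> 'k poly) \<Rightarrow> 'k poly \<Rightarrow> 'k poly" where
  "restr n g = (\<lambda>p. if p \<in> On n then g p else 0)"

definition Lmul :: "nat \<Rightarrow> 'k::field poly \<Rightarrow> 'k poly \<Rightarrow> 'k poly" where
  "Lmul n f = restr n (\<lambda>p. omult n f p)"

definition comm :: "('k::field poly \<Rightarrow> 'k poly) \<Rightarrow> ('k poly \<Rightarrow> 'k poly) \<Rightarrow> 'k poly \<Rightarrow> 'k poly" where
  "comm a b = (\<lambda>p. a (b p) - b (a p))"

fun iter_comm :: "nat \<Rightarrow> 'k::field poly list \<Rightarrow> ('k poly \<Rightarrow> 'k poly) \<Rightarrow> 'k poly \<Rightarrow> 'k poly" where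
  "iter_comm n [] d = d"
| "iter_comm n (f # fs) d = comm (Lmul n f) (iter_comm n fs d)"

definition Diff :: "nat \<Rightarrow> nat \<Rightarrow> ('k::field poly \<Rightarrow> 'k poly) set" where
  "Diff n p = {\<delta>. is_End n \<delta> \<and>
      (\<forall>fs. length fs = Suc p \<longrightarrow> set fs \<subseteq> On n \<longrightarrow> iter_comm n fs \<delta> = (\<lambda>_. 0))}"

definition Diff_ops :: "nat \<Rightarrow> ('k::field poly \<Rightarrow> 'k poly) set" where
  "Diff_ops n = (\<Union>p. Diff n p)"

definition Idn :: "nat \<Rightarrow> 'k::field poly \<Rightarrow> 'k poly" where
  "Idn n = restr n id"

definition Xop :: "nat \<Rightarrow> 'k::field poly \<Rightarrow> 'k poly" where
  "Xop n = Lmul n [:0, 1:]"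

definition Dop :: "nat \<Rightarrow> 'k::field poly \<Rightarrow> 'k poly" where
  "Dop n = restr n pderiv"

datatype gen = E | H | F

fun gen_op :: "nat \<Rightarrow> gen \<Rightarrow> 'k::field poly \<Rightarrow> 'k poly" where
  "gen_op n E = Xop n"
| "gen_op n H = (\<lambda>p. smult 2 (Xop n (Dop n p)) - smult (of_nat n) (Idn n p))"
| "gen_op n F = (\<lambda>p. - Xop n (Dop n (Dop n p)) + smult (of_nat n) (Dop n p))"

text \<open>Elements: functions from words over {e,h,f} to k; genuine elements are those of
  finite support.\<close>
type_synonym 'k fa = "gen list \<Rightarrow> 'k"

definition fin_supp :: "'k::zero fa \<Rightarrow> bool" where
  "fin_supp a \<longleftrightarrow> finite {w. a w \<noteq> 0}"

definition fa_zero :: "'k::zero fa" where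
  "fa_zero = (\<lambda>_. 0)"

definition fa_add :: "'k::plus fa \<Rightarrow> 'k fa \<Rightarrow> 'k fa" where
  "fa_add a b = (\<lambda>w. a w + b w)"

definition fa_smult :: "'k::times \<Rightarrow> 'k fa \<Rightarrow> 'k fa" where
  "fa_smult c a = (\<lambda>w. c * a w)"

definition fa_sub :: "'k::minus fa \<Rightarrow> 'k fa \<Rightarrow> 'k fa" where
  "fa_sub a b = (\<lambda>w. a w - b w)"

definition fa_mul :: "'k::comm_semiring_1 fa \<Rightarrow> 'k fa \<Rightarrow> 'k fa" where
  "fa_mul a b = (\<lambda>w. \<Sum>i\<le>length w. a (take i w) * b (drop i w))"

definition fa_word :: "gen list \<Rightarrow> 'k::{zero,one} fa" where
  "fa_word w = (\<lambda>u. if u = w then 1 else 0)"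

definition fa_gen :: "gen \<Rightarrow> 'k::{zero,one} fa" where
  "fa_gen g = fa_word [g]"

definition fa_const :: "'k::zero \<Rightarrow> 'k fa" where
  "fa_const c = (\<lambda>u. if u = [] then c else 0)"

inductive_set fa_ideal :: "'k::comm_ring_1 fa set \<Rightarrow> 'k fa set" for S where
  gen: "g \<in> S \<Longrightarrow> g \<in> fa_ideal S"
| zero: "fa_zero \<in> fa_ideal S"
| add: "a \<in> fa_ideal S \<Longrightarrow> b \<in> fa_ideal S \<Longrightarrow> fa_add a b \<in> fa_ideal S"
| mul: "a \<in> fa_ideal S \<Longrightarrow> fin_supp u \<Longrightarrow> fin_supp v \<Longrightarrow> fa_mul (fa_mul u a) v \<in> fa_ideal S"

definition fa_bracket :: "'k::comm_ring_1 fa \<Rightarrow> 'k fa \<Rightarrow> 'k fa" where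
  "fa_bracket a b = fa_sub (fa_mul a b) (fa_mul b a)"

definition sl2_relations :: "'k::comm_ring_1 fa set" where
  "sl2_relations =
    {fa_sub (fa_bracket (fa_gen E) (fa_gen F)) (fa_gen H),
     fa_sub (fa_bracket (fa_gen H) (fa_gen E)) (fa_smult 2 (fa_gen E)),
     fa_add (fa_bracket (fa_gen H) (fa_gen F)) (fa_smult 2 (fa_gen F))}"

definition casimir :: "'k::comm_ring_1 fa" where
  "casimir = fa_add (fa_mul (fa_gen H) (fa_gen H))
     (fa_smult 2 (fa_add (fa_mul (fa_gen E) (fa_gen F)) (fa_mul (fa_gen F) (fa_gen E))))"

fun gen_weight :: "gen \<Rightarrow> nat" where
  "gen_weight E = 0" | "gen_weight H = 1" | "gen_weight F = 2"

definition weight :: "gen list \<Rightarrow> nat" where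
  "weight w = sum_list (map gen_weight w)"

fun word_op :: "nat \<Rightarrow> gen list \<Rightarrow> 'k::field poly \<Rightarrow> 'k poly" where
  "word_op n [] = Idn n"
| "word_op n (g # w) = (\<lambda>p. gen_op n g (word_op n w p))"

definition fa_eval :: "nat \<Rightarrow> 'k::field fa \<Rightarrow> 'k poly \<Rightarrow> 'k poly" where
  "fa_eval n a = (\<lambda>p. \<Sum>w\<in>{w. a w \<noteq> 0}. smult (a w) (word_op n w p))"

end

(*
  On the basis x^m (m <= n) of O_n the images of e, h, f act by x^m |-> x^(m+1) (zero for m = n),
  x^m |-> (2m - n) x^m and x^m |-> m (n - m + 1) x^(m-1); so h is diagonal with the distinct
  eigenvalues 2m - n.

  Surjectivity: e^i f^n e^n f^j acts as a nonzero multiple of the matrix unit x^j |-> x^i.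

  Kernel: let J be the ideal generated by the sl2 relations, C - n(n+2) and e^(n+1). Modulo J,
  h e = e (h + 2), h f = f (h - 2), and the Casimir relation turns f e and e f into polynomials
  in h; hence every element is congruent to a sum of terms e^c P(h) and f^a Q(h) with c, a <= n.
  Multiplying an element e^(k+1) r(h) of J by f on the left and on the right and subtracting
  gives, by descending induction from e^(n+1), that e^k prod_(m <= n-k) (h - (2m - n)) lies in J,
  and then likewise f^a prod_(a <= m <= n) (h - (2m - n)); in particular f^(n+1) lies in J. If a
  sum of the above form acts as zero, applying it to each x^m shows that every P and Q vanishes
  at exactly the eigenvalues occurring in these products, so every term lies in J.

  Order: e is multiplication by x, [x, h] = -2x and [x, f] = h, and an endomorphism commuting
  with x commutes with every multiplication operator.
*)
theory Submission
  imports Defs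
begin

lemma smult_sum_right: "smult c (sum f A) = (\<Sum>a\<in>A. smult c (f a))"
  by (induction A rule: infinite_finite_induct) (simp_all add: smult_add_right)

lemma pcompose_linear: "pcompose [:a, 1:] [:b, 1:] = [:a + b, (1::'k::comm_ring_1):]"
  by (simp add: pcompose_pCons algebra_simps)

lemma prod_linear_factors_dvd:
  fixes \<mu> :: "'a \<Rightarrow> 'k::field"
  assumes "finite A" "inj_on \<mu> A" "\<And>a. a \<in> A \<Longrightarrow> poly p (\<mu> a) = 0"
  shows "(\<Prod>a\<in>A. [:- \<mu> a, 1:]) dvd p"
  using assms
proof (induction A rule: finite_induct)
  case (insert x A)
  then obtain q where q: "p = (\<Prod>a\<in>A. [:- \<mu> a, 1:]) * q"
    by (auto elim: dvdE)
  have "poly (\<Prod>a\<in>A. [:- \<mu> a, 1:]) (\<mu> x) \<noteq> 0"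
    using insert by (auto simp: poly_prod prod_zero_iff)
  with q insert.prems(2)[of x] have "[:- \<mu> x, 1:] dvd q"
    by (simp add: dvd_iff_poly_eq_0)
  moreover have "(\<Prod>a\<in>insert x A. [:- \<mu> a, 1:]) = (\<Prod>a\<in>A. [:- \<mu> a, 1:]) * [:- \<mu> x, 1:]"
    by (simp only: prod.insert[OF insert.hyps] mult.commute)
  ultimately show ?case
    unfolding q by (simp only: mult_dvd_mono dvd_refl)
qed simp

lemma numeral_mult_commute: "numeral k * x = x * (numeral k :: 'a::semiring_1)"
  by (metis mult_of_nat_commute of_nat_numeral)

lemma power_mult_commute: "x ^ c * (x * y) = x * (x ^ c * (y::'a::monoid_mult))"
  by (metis mult.assoc power_commutes)

lemma sum_if_unique:
  assumes "finite A" "k \<in> A" "\<And>i. i \<in> A \<Longrightarrow> P i \<longleftrightarrow> i = k"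
  shows "(\<Sum>i\<in>A. if P i then f i else 0) = (f k :: 'a::comm_monoid_add)"
proof -
  have "(\<Sum>i\<in>A. if P i then f i else 0) = (\<Sum>i\<in>A. if i = k then f i else 0)"
    using assms(3) by (intro sum.cong) auto
  then show ?thesis
    using assms(1,2) by (simp add: sum.delta')
qed

section \<open>The free algebra as a ring\<close>

lemma fa_mul_assoc:
  "fa_mul (fa_mul a b) c = fa_mul a (fa_mul (b::'k::comm_semiring_1 fa) c)"
proof
  fix w :: "gen list"
  define L where "L = length w"
  define g where "g = (\<lambda>j m. a (take j w) * b (take m (drop j w)) * c (drop m (drop j w)))"
  have "fa_mul (fa_mul a b) c w = (\<Sum>i\<le>L. \<Sum>j\<le>i. g j (i - j))"
    unfolding fa_mul_def L_def g_def sum_distrib_right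
    by (intro sum.cong refl) (auto simp: drop_take take_take min_def)
  also have "\<dots> = (\<Sum>(j,m)\<in>{(j,m). j + m \<le> L}. g j m)"
    by (rule sum.triangle_reindex_eq[symmetric])
  also have "\<dots> = (\<Sum>j\<le>L. \<Sum>m\<le>L - j. g j m)"
    by (simp add: sum.Sigma) (rule sum.cong; auto)
  also have "\<dots> = fa_mul a (fa_mul b c) w"
    unfolding fa_mul_def L_def g_def
    by (simp add: sum_distrib_left mult.assoc)
  finally show "fa_mul (fa_mul a b) c w = fa_mul a (fa_mul b c) w" .
qed

lemma fa_mul_add_left: "fa_mul (fa_add a b) c = fa_add (fa_mul a c) (fa_mul b (c::'k::comm_semiring_1 fa))"
  unfolding fa_mul_def fa_add_def by (simp add: distrib_right sum.distrib)

lemma fa_mul_add_right: "fa_mul a (fa_add b c) = fa_add (fa_mul a b) (fa_mul a (c::'k::comm_semiring_1 fa))"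
  unfolding fa_mul_def fa_add_def by (simp add: distrib_left sum.distrib)

lemma fa_mul_const_left: "fa_mul (fa_const c) a = fa_smult c (a::'k::comm_semiring_1 fa)"
proof
  fix w :: "gen list"
  have "fa_mul (fa_const c) a w = (\<Sum>i\<le>length w. if i = 0 then c * a w else 0)"
    unfolding fa_mul_def fa_const_def by (intro sum.cong) auto
  then show "fa_mul (fa_const c) a w = fa_smult c a w" by (simp add: fa_smult_def)
qed

lemma fa_mul_const_right: "fa_mul a (fa_const c) = fa_smult c (a::'k::comm_semiring_1 fa)"
proof
  fix w :: "gen list"
  have "fa_mul a (fa_const c) w = (\<Sum>i\<le>length w. if i = length w then c * a w else 0)"
    unfolding fa_mul_def fa_const_def by (intro sum.cong) (auto simp: mult.commute)
  then show "fa_mul a (fa_const c) w = fa_smult c a w" by (simp add: fa_smult_def)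
qed

lemma fa_mul_word: "fa_mul (fa_word u) (fa_word v) = (fa_word (u @ v) :: 'k::comm_semiring_1 fa)"
proof
  fix w :: "gen list"
  have "fa_mul (fa_word u) (fa_word v) w = (\<Sum>i\<le>length w. if i = length u \<and> w = u @ v then 1 else (0::'k))"
    unfolding fa_mul_def fa_word_def
    by (intro sum.cong refl) (auto simp: append_eq_conv_conj)
  then show "fa_mul (fa_word u) (fa_word v) w = (fa_word (u @ v) w :: 'k)"
    by (auto simp: fa_word_def)
qed

lemma fin_supp_fa_zero: "fin_supp fa_zero"
  unfolding fin_supp_def fa_zero_def by simp

lemma fin_supp_fa_const: "fin_supp (fa_const c)"
  unfolding fin_supp_def fa_const_def
  by (rule finite_subset[of _ "{[]}"]) auto

lemma fin_supp_fa_word: "fin_supp (fa_word w :: 'k::zero_neq_one fa)"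
  unfolding fin_supp_def fa_word_def by simp

lemma fin_supp_fa_add: "fin_supp a \<Longrightarrow> fin_supp b \<Longrightarrow> fin_supp (fa_add a (b::'k::monoid_add fa))"
  unfolding fin_supp_def fa_add_def
  by (rule finite_subset[of _ "{w. a w \<noteq> 0} \<union> {w. b w \<noteq> 0}"]) auto

lemma fin_supp_fa_sub: "fin_supp a \<Longrightarrow> fin_supp b \<Longrightarrow> fin_supp (fa_sub a (b::'k::group_add fa))"
  unfolding fin_supp_def fa_sub_def
  by (rule finite_subset[of _ "{w. a w \<noteq> 0} \<union> {w. b w \<noteq> 0}"]) auto

lemma fin_supp_uminus: "fin_supp a \<Longrightarrow> fin_supp (\<lambda>w. - (a::'k::group_add fa) w)"
  unfolding fin_supp_def by simp

lemma fin_supp_fa_mul: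
  assumes "fin_supp a" "fin_supp b"
  shows "fin_supp (fa_mul a (b::'k::comm_semiring_1 fa))"
proof -
  have "{w. fa_mul a b w \<noteq> 0} \<subseteq> (\<lambda>(u,v). u @ v) ` ({u. a u \<noteq> 0} \<times> {v. b v \<noteq> 0})"
  proof
    fix w assume "w \<in> {w. fa_mul a b w \<noteq> 0}"
    then obtain i where "a (take i w) * b (drop i w) \<noteq> 0"
      unfolding fa_mul_def by (metis (mono_tags, lifting) mem_Collect_eq sum.neutral)
    then show "w \<in> (\<lambda>(u,v). u @ v) ` ({u. a u \<noteq> 0} \<times> {v. b v \<noteq> 0})"
      by (intro image_eqI[where x="(take i w, drop i w)"]) auto
  qed
  moreover have "finite ((\<lambda>(u,v). u @ v) ` ({u. a u \<noteq> 0} \<times> {v. b v \<noteq> 0}))"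
    using assms unfolding fin_supp_def by auto
  ultimately show ?thesis unfolding fin_supp_def by (rule finite_subset)
qed

typedef (overloaded) ('k::comm_ring_1) freealg = "{a :: 'k fa. fin_supp a}"
  by (rule exI[of _ fa_zero]) (simp add: fin_supp_fa_zero)

setup_lifting type_definition_freealg

instantiation freealg :: (comm_ring_1) ring_1
begin
lift_definition zero_freealg :: "'a freealg" is fa_zero by (rule fin_supp_fa_zero)
lift_definition one_freealg :: "'a freealg" is "fa_const 1" by (rule fin_supp_fa_const)
lift_definition plus_freealg :: "'a freealg \<Rightarrow> 'a freealg \<Rightarrow> 'a freealg" is fa_add
  by (rule fin_supp_fa_add)
lift_definition minus_freealg :: "'a freealg \<Rightarrow> 'a freealg \<Rightarrow> 'a freealg" is fa_sub
  by (rule fin_supp_fa_sub)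
lift_definition uminus_freealg :: "'a freealg \<Rightarrow> 'a freealg" is "\<lambda>a w. - a w"
  by (rule fin_supp_uminus)
lift_definition times_freealg :: "'a freealg \<Rightarrow> 'a freealg \<Rightarrow> 'a freealg" is fa_mul
  by (rule fin_supp_fa_mul)
instance
proof
  fix a b c :: "'a freealg"
  show "a * b * c = a * (b * c)" by transfer (rule fa_mul_assoc)
  show "a + b + c = a + (b + c)" by transfer (simp add: fa_add_def add.assoc)
  show "a + b = b + a" by transfer (simp add: fa_add_def add.commute)
  show "0 + a = a" by transfer (simp add: fa_add_def fa_zero_def)
  show "- a + a = 0" by transfer (simp add: fa_zero_def fa_add_def)
  show "a - b = a + - b" by transfer (simp add: fa_add_def fa_sub_def)
  show "1 * a = a" by transfer (simp add: fa_mul_const_left fa_smult_def)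
  show "a * 1 = a" by transfer (simp add: fa_mul_const_right fa_smult_def)
  show "(a + b) * c = a * c + b * c" by transfer (rule fa_mul_add_left)
  show "a * (b + c) = a * b + a * c" by transfer (rule fa_mul_add_right)
  show "(0::'a freealg) \<noteq> 1" by transfer (auto simp: fa_zero_def fa_const_def fun_eq_iff)
qed
end

lift_definition scalar :: "'k::comm_ring_1 \<Rightarrow> 'k freealg" is fa_const
  by (rule fin_supp_fa_const)

lift_definition word :: "gen list \<Rightarrow> 'k::comm_ring_1 freealg" is fa_word
  by (rule fin_supp_fa_word)

lemma Rep_freealg_zero: "Rep_freealg 0 = fa_zero"
  by transfer simp

lemma Rep_freealg_plus: "Rep_freealg (x + y) = fa_add (Rep_freealg x) (Rep_freealg y)"
  by transfer simp

lemma Rep_freealg_minus: "Rep_freealg (x - y) = fa_sub (Rep_freealg x) (Rep_freealg y)"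
  by transfer simp

lemma Rep_freealg_times: "Rep_freealg (x * y) = fa_mul (Rep_freealg x) (Rep_freealg y)"
  by transfer simp

lemma Rep_freealg_word: "Rep_freealg (word w) = fa_word w"
  by transfer simp

lemma Rep_freealg_scalar: "Rep_freealg (scalar c) = fa_const c"
  by transfer simp

lemma Rep_freealg_scalar_times: "Rep_freealg (scalar c * x) = fa_smult c (Rep_freealg x)"
  by transfer (simp add: fa_mul_const_left)

lemma Rep_freealg_sum: "Rep_freealg (sum f A) w = (\<Sum>a\<in>A. Rep_freealg (f a) w)"
  by (induction A rule: infinite_finite_induct)
    (simp_all add: Rep_freealg_zero Rep_freealg_plus fa_zero_def fa_add_def)

lemma word_append: "word (u @ v) = (word u * word v :: 'k::comm_ring_1 freealg)"
  by transfer (simp add: fa_mul_word)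

lemma word_Nil: "word [] = (1 :: 'k::comm_ring_1 freealg)"
  by transfer (simp add: fa_word_def fa_const_def)

lemma scalar_commute: "scalar c * x = x * scalar c"
  by transfer (simp add: fa_mul_const_left fa_mul_const_right)

lemma scalar_mult_left_commute: "x * (scalar c * y) = scalar c * (x * y)"
  by (metis mult.assoc scalar_commute)

lemma scalar_add: "scalar (a + b) = scalar a + (scalar b :: 'k::comm_ring_1 freealg)"
  by transfer (auto simp: fa_const_def fa_add_def)

lemma scalar_mult: "scalar (a * b) = scalar a * (scalar b :: 'k::comm_ring_1 freealg)"
  by transfer (simp only: fa_mul_const_left, auto simp: fa_const_def fa_smult_def)

lemma scalar_zero: "scalar 0 = (0 :: 'k::comm_ring_1 freealg)"
  by transfer (simp add: fa_const_def fa_zero_def)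

lemma scalar_one: "scalar 1 = (1 :: 'k::comm_ring_1 freealg)"
  by transfer simp

lemma scalar_uminus: "scalar (- a) = - (scalar a :: 'k::comm_ring_1 freealg)"
  by transfer (auto simp: fa_const_def)

lemma scalar_of_nat: "scalar (of_nat m) = (of_nat m :: 'k::comm_ring_1 freealg)"
  by (induction m) (simp_all add: scalar_zero scalar_one scalar_add)

lemma scalar_numeral: "scalar (numeral m) = (numeral m :: 'k::comm_ring_1 freealg)"
  using scalar_of_nat[of "numeral m", where 'k='k] by simp

lemma scalar_times_word_apply: "Rep_freealg (scalar c * word u) w = (if w = u then c else 0)"
  by (simp add: Rep_freealg_scalar_times Rep_freealg_word fa_smult_def fa_word_def)

definition fsupp :: "'k::comm_ring_1 freealg \<Rightarrow> gen list set" where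
  "fsupp x = {w. Rep_freealg x w \<noteq> 0}"

lemma finite_fsupp[simp]: "finite (fsupp x)"
  unfolding fsupp_def using Rep_freealg[of x] by (simp add: fin_supp_def)

lemma freealg_expansion:
  assumes "finite S" "fsupp x \<subseteq> S"
  shows "x = (\<Sum>w\<in>S. scalar (Rep_freealg x w) * word w)"
proof -
  have "Rep_freealg (\<Sum>w\<in>S. scalar (Rep_freealg x w) * word w) u = Rep_freealg x u" for u
    using assms by (auto simp: Rep_freealg_sum scalar_times_word_apply sum.delta fsupp_def)
  then show ?thesis by (simp add: Rep_freealg_inject[symmetric] fun_eq_iff)
qed

section \<open>Endomorphisms of the truncated polynomial algebra\<close>

lemma On_iff: "p \<in> On n \<longleftrightarrow> degree p \<le> n"
  by (simp add: On_def)

lemma coeff_On_gt: "p \<in> On n \<Longrightarrow> n < i \<Longrightarrow> coeff p i = 0"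
  by (simp add: On_def coeff_eq_0)

lemma On_by_coeff: "(\<And>i. n < i \<Longrightarrow> coeff p i = 0) \<Longrightarrow> p \<in> On n"
  by (simp add: On_def degree_le)

lemma On_zero[simp]: "0 \<in> On n"
  by (simp add: On_def)

lemma On_add[simp]: "p \<in> On n \<Longrightarrow> q \<in> On n \<Longrightarrow> p + q \<in> On n"
  by (simp add: On_def degree_add_le)

lemma On_diff[simp]: "p \<in> On n \<Longrightarrow> q \<in> On n \<Longrightarrow> p - q \<in> On n"
  by (simp add: On_def degree_diff_le)

lemma On_uminus[simp]: "p \<in> On n \<Longrightarrow> - p \<in> On n"
  by (simp add: On_def)

lemma On_smult[simp]: "p \<in> On n \<Longrightarrow> smult c p \<in> On n"
  by (simp add: On_def)

lemma On_monom[simp]: "m \<le> n \<Longrightarrow> monom c m \<in> On n"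
  by (simp add: On_def le_trans[OF degree_monom_le])

lemma On_sum[simp]: "(\<And>i. i \<in> A \<Longrightarrow> f i \<in> On n) \<Longrightarrow> sum f A \<in> On n"
  by (induction A rule: infinite_finite_induct) auto

lemma On_pderiv[simp]: "p \<in> On n \<Longrightarrow> pderiv p \<in> On n"
  by (rule On_by_coeff) (simp add: coeff_pderiv coeff_On_gt)

lemma On_eq_sum_monom: "p \<in> On n \<Longrightarrow> p = (\<Sum>m\<le>n. smult (coeff p m) (monom 1 m))"
  by (simp add: smult_monom poly_as_sum_of_monoms' On_iff)

lemma mod_monom_eq_poly_cutoff: "(r::'k::field poly) mod monom 1 (Suc n) = poly_cutoff (Suc n) r"
proof -
  have "monom 1 (Suc n) dvd r - poly_cutoff (Suc n) r"
    by (simp add: monom_1_dvd_iff' coeff_poly_cutoff)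
  then have "r mod monom 1 (Suc n) = poly_cutoff (Suc n) r mod monom 1 (Suc n)"
    by (simp add: mod_eq_dvd_iff)
  also have "\<dots> = poly_cutoff (Suc n) r"
  proof (rule mod_poly_less)
    have "degree (poly_cutoff (Suc n) r) \<le> n"
      by (rule degree_le) (simp add: coeff_poly_cutoff)
    then show "degree (poly_cutoff (Suc n) r) < degree (monom (1::'k) (Suc n))"
      by (simp add: degree_monom_eq)
  qed
  finally show ?thesis .
qed

lemma coeff_omult: "coeff (omult n p q) i = (if i \<le> n then coeff (p * q) i else 0)"
  by (simp add: omult_def mod_monom_eq_poly_cutoff coeff_poly_cutoff)

lemma On_omult[simp]: "omult n p q \<in> On n"
  by (rule On_by_coeff) (simp add: coeff_omult)

lemma Lmul_On[simp]: "Lmul n f p \<in> On n"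
  by (simp add: Lmul_def restr_def)

lemma Lmul_out: "p \<notin> On n \<Longrightarrow> Lmul n f p = 0"
  by (simp add: Lmul_def restr_def)

lemma Lmul_zero[simp]: "Lmul n f 0 = 0"
  by (simp add: Lmul_def restr_def omult_def)

lemma coeff_Lmul: "p \<in> On n \<Longrightarrow> coeff (Lmul n f p) i = (if i \<le> n then coeff (f * p) i else 0)"
  by (simp add: Lmul_def restr_def coeff_omult)

lemma coeff_Xop: "p \<in> On n \<Longrightarrow> coeff (Xop n p) i = (if 0 < i \<and> i \<le> n then coeff p (i - 1) else 0)"
  by (cases i) (auto simp: Xop_def coeff_Lmul coeff_pCons)

lemma Xop_out: "p \<notin> On n \<Longrightarrow> Xop n p = 0"
  by (simp add: Xop_def Lmul_out)

lemma Xop_On[simp]: "Xop n p \<in> On n"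
  by (simp add: Xop_def)

lemma Dop_in: "p \<in> On n \<Longrightarrow> Dop n p = pderiv p"
  by (simp add: Dop_def restr_def)

lemma Dop_out: "p \<notin> On n \<Longrightarrow> Dop n p = 0"
  by (simp add: Dop_def restr_def)

lemma Idn_in: "p \<in> On n \<Longrightarrow> Idn n p = p"
  by (simp add: Idn_def restr_def)

lemma Idn_out: "p \<notin> On n \<Longrightarrow> Idn n p = 0"
  by (simp add: Idn_def restr_def)

lemma gen_op_out: "p \<notin> On n \<Longrightarrow> gen_op n g p = 0"
  by (cases g) (simp_all add: Xop_out Dop_out Idn_out Xop_def Dop_def restr_def Lmul_out)

lemma coeff_gen_op_E: "p \<in> On n \<Longrightarrow>
   coeff (gen_op n E p) i = (if 0 < i \<and> i \<le> n then coeff p (i - 1) else 0)"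
  by (simp add: coeff_Xop)

lemma coeff_gen_op_H: "(p::'k::field poly) \<in> On n \<Longrightarrow>
   coeff (gen_op n H p) i = (of_nat (2 * i) - of_nat n) * coeff p i"
  by (cases "i \<le> n"; cases i)
    (auto simp: coeff_Xop Dop_in Idn_in coeff_pderiv coeff_On_gt algebra_simps)

lemma coeff_gen_op_F: "(p::'k::field poly) \<in> On n \<Longrightarrow>
   coeff (gen_op n F p) i = of_nat (Suc i) * (of_nat n - of_nat i) * coeff p (Suc i)"
  by (cases "i \<le> n"; cases i)
    (auto simp: coeff_Xop Dop_in coeff_pderiv coeff_On_gt algebra_simps)

lemmas coeff_gen_op = coeff_gen_op_E coeff_gen_op_H coeff_gen_op_F

lemma gen_op_add: "p \<in> On n \<Longrightarrow> q \<in> On n \<Longrightarrow>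
    gen_op n g (p + q) = gen_op n g p + (gen_op n g q :: 'k::field poly)"
  by (cases g) (auto simp: poly_eq_iff coeff_gen_op algebra_simps simp del: gen_op.simps)

lemma gen_op_smult: "p \<in> On n \<Longrightarrow>
    gen_op n g (smult c p) = smult c (gen_op n g p :: 'k::field poly)"
  by (cases g) (auto simp: poly_eq_iff coeff_gen_op algebra_simps simp del: gen_op.simps)

lemma gen_op_E_monom: "m \<le> n \<Longrightarrow>
    gen_op n E (monom c m) = (if m < n then monom c (Suc m) else (0::'k::field poly))"
  by (auto simp: poly_eq_iff coeff_gen_op_E coeff_monom simp del: gen_op.simps)

lemma gen_op_H_monom: "m \<le> n \<Longrightarrow>
    gen_op n H (monom c m) = (monom ((of_nat (2*m) - of_nat n) * c) m :: 'k::field poly)"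
  by (auto simp: poly_eq_iff coeff_gen_op_H coeff_monom simp del: gen_op.simps)

lemma gen_op_F_monom: "m \<le> n \<Longrightarrow>
    gen_op n F (monom c m) = (monom (of_nat m * (of_nat n - of_nat (m - 1)) * c) (m - 1) :: 'k::field poly)"
  by (cases m) (auto simp: poly_eq_iff coeff_gen_op_F coeff_monom simp del: gen_op.simps)

lemmas gen_op_monom = gen_op_E_monom gen_op_H_monom gen_op_F_monom

lemma is_EndI:
  assumes "\<And>p. \<delta> p \<in> On n" "\<And>p q. p \<in> On n \<Longrightarrow> q \<in> On n \<Longrightarrow> \<delta> (p + q) = \<delta> p + \<delta> q"
    "\<And>c p. p \<in> On n \<Longrightarrow> \<delta> (smult c p) = smult c (\<delta> p)"
    "\<And>p. p \<notin> On n \<Longrightarrow> \<delta> p = 0"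
  shows "is_End n \<delta>"
  using assms unfolding is_End_def by blast

context
  fixes n :: nat and \<delta> :: "'k::field poly \<Rightarrow> 'k poly"
  assumes \<delta>: "is_End n \<delta>"
begin

lemma End_On: "\<delta> p \<in> On n"
  using \<delta> unfolding is_End_def by (metis On_zero)

lemma End_out: "p \<notin> On n \<Longrightarrow> \<delta> p = 0"
  using \<delta> unfolding is_End_def by blast

lemma End_add: "p \<in> On n \<Longrightarrow> q \<in> On n \<Longrightarrow> \<delta> (p + q) = \<delta> p + \<delta> q"
  using \<delta> unfolding is_End_def by blast

lemma End_smult: "p \<in> On n \<Longrightarrow> \<delta> (smult c p) = smult c (\<delta> p)"
  using \<delta> unfolding is_End_def by blast

lemma End_zero: "\<delta> 0 = 0"
  using End_smult[of 0 0] by simp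

lemma End_uminus: "p \<in> On n \<Longrightarrow> \<delta> (- p) = - \<delta> p"
  using End_smult[of p "-1"] by simp

lemma End_diff: "p \<in> On n \<Longrightarrow> q \<in> On n \<Longrightarrow> \<delta> (p - q) = \<delta> p - \<delta> q"
  using End_add[of p "- q"] End_uminus[of q] by simp

lemma End_sum: "(\<And>i. i \<in> A \<Longrightarrow> f i \<in> On n) \<Longrightarrow> \<delta> (sum f A) = (\<Sum>i\<in>A. \<delta> (f i))"
  by (induction A rule: infinite_finite_induct) (simp_all add: End_zero End_add)

end

lemma End_eqI:
  assumes A: "is_End n A" and B: "is_End n B"
    and monom: "\<And>m. m \<le> n \<Longrightarrow> A (monom 1 m) = B (monom (1::'k::field) m)"
  shows "A = B"
proof
  fix p :: "'k poly"
  show "A p = B p"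
  proof (cases "p \<in> On n")
    case True
    have "A p = (\<Sum>m\<le>n. smult (coeff p m) (A (monom 1 m)))"
      by (subst On_eq_sum_monom[OF True], subst End_sum[OF A]) (auto simp: End_smult[OF A])
    also have "\<dots> = (\<Sum>m\<le>n. smult (coeff p m) (B (monom 1 m)))"
      using monom by simp
    also have "\<dots> = B p"
      by (subst (2) On_eq_sum_monom[OF True], subst End_sum[OF B]) (auto simp: End_smult[OF B])
    finally show ?thesis .
  next
    case False
    then show ?thesis by (simp add: End_out[OF A] End_out[OF B])
  qed
qed

lemma End_zero_op: "is_End n (\<lambda>_. 0 :: 'k::field poly)"
  by (rule is_EndI) auto

lemma End_Idn: "is_End n (Idn n)"
  by (rule is_EndI) (auto simp: Idn_def restr_def)

lemma End_comp: "is_End n A \<Longrightarrow> is_End n B \<Longrightarrow> is_End n (\<lambda>p. A (B p))"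
  by (rule is_EndI) (auto simp: End_On End_add End_smult End_out End_zero)

lemma End_gen_op: "is_End n (gen_op n g :: 'k::field poly \<Rightarrow> _)"
  by (rule is_EndI)
    (auto simp: gen_op_add gen_op_smult gen_op_out simp del: gen_op.simps,
     cases g, auto simp: Idn_def restr_def Xop_def Dop_def Lmul_def)

lemma gen_op_On[simp]: "gen_op n g p \<in> On n"
  by (rule End_On[OF End_gen_op])

lemma End_word_op: "is_End n (word_op n w :: 'k::field poly \<Rightarrow> _)"
  by (induction w) (auto simp: End_Idn intro: End_comp[OF End_gen_op] simp del: gen_op.simps)

lemma word_op_append: "word_op n (u @ v) p = word_op n u (word_op n v (p :: 'k::field poly))"
  by (induction u) (simp_all add: Idn_in End_On[OF End_word_op])

definition eval_op :: "nat \<Rightarrow> 'k::field freealg \<Rightarrow> 'k poly \<Rightarrow> 'k poly" where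
  "eval_op n x = fa_eval n (Rep_freealg x)"

lemma eval_op_expansion:
  assumes "finite S" "fsupp x \<subseteq> S"
  shows "eval_op n x p = (\<Sum>w\<in>S. smult (Rep_freealg x w) (word_op n w p))"
  unfolding eval_op_def fa_eval_def
  by (rule sum.mono_neutral_left) (use assms in \<open>auto simp: fsupp_def\<close>)

lemma eval_op_fsupp: "eval_op n x p = (\<Sum>w\<in>fsupp x. smult (Rep_freealg x w) (word_op n w p))"
  by (rule eval_op_expansion) auto

lemma eval_op_add: "eval_op n (x + y) p = eval_op n x p + eval_op n y p"
proof -
  let ?S = "fsupp x \<union> fsupp y"
  have "fsupp (x + y) \<subseteq> ?S"
    by (auto simp: fsupp_def Rep_freealg_plus fa_add_def)
  then show ?thesis
    by (simp add: eval_op_expansion[of ?S] Rep_freealg_plus fa_add_def smult_add_left sum.distrib)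
qed

lemma eval_op_zero: "eval_op n 0 p = 0"
  by (simp add: eval_op_def fa_eval_def Rep_freealg_zero fa_zero_def)

lemma eval_op_sum: "eval_op n (sum f A) p = (\<Sum>a\<in>A. eval_op n (f a) p)"
  by (induction A rule: infinite_finite_induct) (simp_all add: eval_op_zero eval_op_add)

lemma eval_op_scalar_word: "eval_op n (scalar c * word u) p = smult c (word_op n u p)"
proof -
  have "eval_op n (scalar c * word u) p = (\<Sum>w\<in>{u}. smult (Rep_freealg (scalar c * word u) w) (word_op n w p))"
    by (rule eval_op_expansion) (auto simp: fsupp_def scalar_times_word_apply)
  then show ?thesis by (simp add: scalar_times_word_apply)
qed

lemma End_eval_op: "is_End n (eval_op n x)"
proof (rule is_EndI)
  fix p show "eval_op n x p \<in> On n"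
    by (auto simp: eval_op_fsupp End_On[OF End_word_op])
next
  fix p q :: "'a poly" assume "p \<in> On n" "q \<in> On n"
  then show "eval_op n x (p + q) = eval_op n x p + eval_op n x q"
    by (simp add: eval_op_fsupp End_add[OF End_word_op] smult_add_right sum.distrib)
next
  fix c and p :: "'a poly" assume "p \<in> On n"
  then show "eval_op n x (smult c p) = smult c (eval_op n x p)"
    by (simp add: eval_op_fsupp End_smult[OF End_word_op] smult_sum_right mult.commute)
next
  fix p :: "'a poly" assume "p \<notin> On n"
  then show "eval_op n x p = 0"
    by (simp add: eval_op_fsupp End_out[OF End_word_op])
qed

lemma eval_op_mult: "eval_op n (x * y) p = eval_op n x (eval_op n y p)"
proof -
  have xy: "x * y = (\<Sum>u\<in>fsupp x. \<Sum>v\<in>fsupp y. scalar (Rep_freealg x u * Rep_freealg y v) * word (u @ v))"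
    by (subst freealg_expansion[OF _ order_refl, of x], simp, subst freealg_expansion[OF _ order_refl, of y], simp)
      (simp add: sum_product word_append scalar_mult mult.assoc scalar_commute[of _ "word _"]
        flip: mult.assoc[of "scalar _" "word _"])
  show ?thesis
    by (simp add: xy eval_op_sum eval_op_scalar_word word_op_append eval_op_fsupp[of n x]
        eval_op_fsupp[of n y] End_sum[OF End_word_op] End_smult[OF End_word_op]
        End_On[OF End_word_op] smult_sum_right)
qed

lemma eval_op_scalar: "eval_op n (scalar c) p = smult c (Idn n p)"
  using eval_op_scalar_word[of n c "[]" p] by (simp add: word_Nil)

lemma eval_op_one: "eval_op n 1 p = Idn n p"
  using eval_op_scalar[of n 1 p] by (simp add: scalar_one)

lemma eval_op_scalar_mult: "eval_op n (scalar c * x) p = smult c (eval_op n x p)"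
  by (simp add: eval_op_mult eval_op_scalar Idn_in End_On[OF End_eval_op])

lemma eval_op_uminus: "eval_op n (- x) p = - eval_op n x p"
  using eval_op_scalar_mult[of n "-1" x p] by (simp add: scalar_uminus scalar_one)

lemma eval_op_diff: "eval_op n (x - y) p = eval_op n x p - eval_op n y p"
  using eval_op_add[of n x "- y" p] by (simp add: eval_op_uminus)

lemma eval_op_word: "eval_op n (word w) = word_op n w"
proof
  fix p show "eval_op n (word w) p = word_op n w p"
    using eval_op_scalar_word[of n 1 w p] by (simp add: scalar_one)
qed

section \<open>The ideal of relations\<close>

definition gen_e :: "'k::comm_ring_1 freealg" where "gen_e = word [E]"
definition gen_h :: "'k::comm_ring_1 freealg" where "gen_h = word [H]"
definition gen_f :: "'k::comm_ring_1 freealg" where "gen_f = word [F]"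

definition relators :: "nat \<Rightarrow> 'k::comm_ring_1 freealg set" where
  "relators n =
    {gen_e * gen_f - gen_f * gen_e - gen_h,
     gen_h * gen_e - gen_e * gen_h - 2 * gen_e,
     gen_h * gen_f - gen_f * gen_h + 2 * gen_f,
     gen_h * gen_h + 2 * (gen_e * gen_f + gen_f * gen_e) - of_nat (n * (n + 2)),
     gen_e ^ Suc n}"

definition rel_ideal :: "nat \<Rightarrow> 'k::comm_ring_1 freealg set" where
  "rel_ideal n = {x. Rep_freealg x \<in> fa_ideal (Rep_freealg ` relators n)}"

lemma gen_e_pow: "gen_e ^ k = (word (replicate k E) :: 'k::comm_ring_1 freealg)"
  by (induction k) (simp_all add: word_Nil gen_e_def flip: word_append)

lemma Rep_freealg_numeral_times: "Rep_freealg (numeral k * x) = fa_smult (numeral k) (Rep_freealg x)"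
  by (metis Rep_freealg_scalar_times scalar_numeral)

lemma Rep_freealg_of_nat: "Rep_freealg (of_nat m) = fa_const (of_nat m)"
  by (metis Rep_freealg_scalar scalar_of_nat)

lemma Rep_relators:
  "Rep_freealg ` relators n = sl2_relations \<union>
     {fa_sub casimir (fa_const (of_nat (n * (n + 2)))), fa_word (replicate (Suc n) E)}"
  unfolding relators_def gen_e_pow
  by (simp only: image_insert image_empty Rep_freealg_minus Rep_freealg_plus
      Rep_freealg_numeral_times Rep_freealg_of_nat,
    simp only: Rep_freealg_times Rep_freealg_word gen_e_def gen_h_def gen_f_def)
    (simp add: sl2_relations_def casimir_def fa_bracket_def fa_gen_def insert_commute)

lemma rel_ideal_zero[simp]: "0 \<in> rel_ideal n"
  by (simp add: rel_ideal_def Rep_freealg_zero fa_ideal.zero)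

lemma rel_ideal_add: "x \<in> rel_ideal n \<Longrightarrow> y \<in> rel_ideal n \<Longrightarrow> x + y \<in> rel_ideal n"
  by (simp add: rel_ideal_def Rep_freealg_plus fa_ideal.add)

lemma rel_ideal_mult: "x \<in> rel_ideal n \<Longrightarrow> u * x * v \<in> rel_ideal n"
  using Rep_freealg[of u] Rep_freealg[of v]
  by (simp add: rel_ideal_def Rep_freealg_times fa_ideal.mul)

lemma rel_ideal_mult_left: "x \<in> rel_ideal n \<Longrightarrow> u * x \<in> rel_ideal n"
  using rel_ideal_mult[of x n u 1] by simp

lemma rel_ideal_mult_right: "x \<in> rel_ideal n \<Longrightarrow> x * v \<in> rel_ideal n"
  using rel_ideal_mult[of x n 1 v] by simp

lemma rel_ideal_uminus: "x \<in> rel_ideal n \<Longrightarrow> - x \<in> rel_ideal n"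
  using rel_ideal_mult_left[of x n "-1"] by simp

lemma rel_ideal_diff: "x \<in> rel_ideal n \<Longrightarrow> y \<in> rel_ideal n \<Longrightarrow> x - y \<in> rel_ideal n"
  using rel_ideal_add[of x n "- y"] rel_ideal_uminus[of y n] by simp

lemma rel_ideal_sum: "(\<And>a. a \<in> A \<Longrightarrow> f a \<in> rel_ideal n) \<Longrightarrow> sum f A \<in> rel_ideal n"
  by (induction A rule: infinite_finite_induct) (auto intro: rel_ideal_add)

lemma rel_ideal_scalar_cancel:
  assumes "scalar d * x \<in> rel_ideal n" "d \<noteq> (0::'k::field)"
  shows "x \<in> rel_ideal n"
proof -
  have "scalar (1/d) * (scalar d * x) \<in> rel_ideal n"
    using rel_ideal_mult_left[OF assms(1)] .
  also have "scalar (1/d) * (scalar d * x) = x"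
    using assms(2) by (simp add: mult.assoc[symmetric] scalar_one flip: scalar_mult)
  finally show ?thesis .
qed

lemma relators_in_rel_ideal: "r \<in> relators n \<Longrightarrow> r \<in> rel_ideal n"
  by (simp add: rel_ideal_def fa_ideal.gen)

lemma e_pow_in_rel_ideal: "gen_e ^ Suc n \<in> rel_ideal n"
  by (simp add: relators_in_rel_ideal relators_def)

definition rel_cong :: "nat \<Rightarrow> 'k::comm_ring_1 freealg \<Rightarrow> 'k freealg \<Rightarrow> bool" where
  "rel_cong n x y \<longleftrightarrow> x - y \<in> rel_ideal n"

lemma rel_cong_refl[simp]: "rel_cong n x x"
  by (simp add: rel_cong_def)

lemma rel_cong_sym: "rel_cong n x y \<Longrightarrow> rel_cong n y x"
  unfolding rel_cong_def using rel_ideal_uminus by fastforce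

lemma rel_cong_trans[trans]: "rel_cong n x y \<Longrightarrow> rel_cong n y z \<Longrightarrow> rel_cong n x z"
  unfolding rel_cong_def using rel_ideal_add by fastforce

lemma rel_cong_add: "rel_cong n x y \<Longrightarrow> rel_cong n x' y' \<Longrightarrow> rel_cong n (x + x') (y + y')"
  unfolding rel_cong_def using rel_ideal_add by (fastforce simp: algebra_simps)

lemma rel_cong_mult_left: "rel_cong n x y \<Longrightarrow> rel_cong n (z * x) (z * y)"
  unfolding rel_cong_def using rel_ideal_mult_left by (fastforce simp: algebra_simps)

lemma rel_cong_mult_right: "rel_cong n x y \<Longrightarrow> rel_cong n (x * z) (y * z)"
  unfolding rel_cong_def using rel_ideal_mult_right by (fastforce simp: algebra_simps)

lemma rel_cong_rel_ideal: "rel_cong n x y \<Longrightarrow> x \<in> rel_ideal n \<Longrightarrow> y \<in> rel_ideal n"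
  unfolding rel_cong_def using rel_ideal_diff[of x n "x - y"] by simp

lemma cong_ef_fe: "rel_cong n (gen_e * gen_f) (gen_f * gen_e + gen_h)"
proof -
  have "gen_e * gen_f - gen_f * gen_e - gen_h \<in> rel_ideal n"
    by (rule relators_in_rel_ideal) (simp add: relators_def)
  then show ?thesis by (simp add: rel_cong_def algebra_simps)
qed

lemma cong_he: "rel_cong n (gen_h * gen_e) (gen_e * (gen_h + 2))"
proof -
  have "gen_h * gen_e - gen_e * gen_h - 2 * gen_e \<in> rel_ideal n"
    by (rule relators_in_rel_ideal) (simp add: relators_def)
  then show ?thesis by (simp add: rel_cong_def algebra_simps numeral_mult_commute)
qed

lemma cong_hf: "rel_cong n (gen_h * gen_f) (gen_f * (gen_h - 2))"
proof -
  have "gen_h * gen_f - gen_f * gen_h + 2 * gen_f \<in> rel_ideal n"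
    by (rule relators_in_rel_ideal) (simp add: relators_def)
  then show ?thesis by (simp add: rel_cong_def algebra_simps numeral_mult_commute)
qed

definition hpoly :: "'k::comm_ring_1 poly \<Rightarrow> 'k freealg" where
  "hpoly p = (\<Sum>i<Suc (degree p). scalar (coeff p i) * gen_h ^ i)"

lemma hpoly_bound: "degree p < N \<Longrightarrow> hpoly p = (\<Sum>i<N. scalar (coeff p i) * gen_h ^ i)"
  unfolding hpoly_def
  by (rule sum.mono_neutral_left) (auto simp: coeff_eq_0 scalar_zero)

lemma hpoly_pCons: "hpoly (pCons a p) = scalar a + gen_h * hpoly p"
proof -
  let ?N = "Suc (degree p)"
  have "hpoly (pCons a p) = (\<Sum>i<Suc ?N. scalar (coeff (pCons a p) i) * gen_h ^ i)"
    by (rule hpoly_bound) (use degree_pCons_le[of a p] in simp)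
  also have "\<dots> = scalar a + (\<Sum>i<?N. scalar (coeff p i) * gen_h ^ Suc i)"
    by (simp only: sum.lessThan_Suc_shift) simp
  also have "\<dots> = scalar a + gen_h * hpoly p"
    unfolding hpoly_def sum_distrib_left power_Suc by (metis mult.assoc scalar_commute)
  finally show ?thesis .
qed

lemma hpoly_0[simp]: "hpoly 0 = 0"
  by (simp add: hpoly_def scalar_zero)

lemma hpoly_const: "hpoly [:c:] = scalar c"
  by (simp add: hpoly_pCons)

lemma hpoly_one: "hpoly 1 = 1"
  by (simp add: one_pCons hpoly_pCons scalar_one)

lemma hpoly_X: "hpoly [:0, 1:] = gen_h"
  by (simp add: hpoly_pCons scalar_zero scalar_one)

lemma hpoly_add: "hpoly (p + q) = hpoly p + hpoly q"
proof -
  let ?N = "Suc (max (degree p) (degree q))"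
  have "hpoly (p + q) = (\<Sum>i<?N. scalar (coeff (p + q) i) * gen_h ^ i)"
    by (rule hpoly_bound) (simp add: degree_add_le less_Suc_eq_le)
  also have "\<dots> = (\<Sum>i<?N. scalar (coeff p i) * gen_h ^ i) + (\<Sum>i<?N. scalar (coeff q i) * gen_h ^ i)"
    by (simp add: scalar_add distrib_right sum.distrib)
  also have "\<dots> = hpoly p + hpoly q"
    by (simp add: hpoly_bound[of p ?N] hpoly_bound[of q ?N])
  finally show ?thesis .
qed

lemma hpoly_smult: "hpoly (smult c p) = scalar c * hpoly p"
proof -
  have "hpoly (smult c p) = (\<Sum>i<Suc (degree p). scalar (coeff (smult c p) i) * gen_h ^ i)"
    by (rule hpoly_bound) (use degree_smult_le[of c p] in auto)
  then show ?thesis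
    unfolding hpoly_def by (simp only: coeff_smult scalar_mult sum_distrib_left mult.assoc)
qed

lemma hpoly_diff: "hpoly (p - q) = hpoly p - hpoly q"
  using hpoly_add[of "p - q" q] by (simp add: algebra_simps)

lemma hpoly_mult: "hpoly (p * q) = hpoly p * hpoly q"
proof (induction p rule: pCons_induct)
  case (pCons a p)
  have "hpoly (pCons a p * q) = scalar a * hpoly q + gen_h * (hpoly p * hpoly q)"
    by (simp add: hpoly_add hpoly_smult hpoly_pCons scalar_zero pCons.IH)
  then show ?case
    by (simp add: hpoly_pCons algebra_simps)
qed simp

lemma cong_hpoly_e: "rel_cong n (hpoly p * gen_e) (gen_e * hpoly (pcompose p [:2, 1:]))"
proof (induction p rule: pCons_induct)
  case (pCons a p)
  let ?p = "pcompose p [:2, 1:]"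
  have "hpoly (pCons a p) * gen_e = scalar a * gen_e + gen_h * (hpoly p * gen_e)"
    by (simp add: hpoly_pCons algebra_simps)
  also have "rel_cong n \<dots> (scalar a * gen_e + (gen_h * gen_e) * hpoly ?p)"
    unfolding mult.assoc by (intro rel_cong_add rel_cong_refl rel_cong_mult_left pCons.IH)
  also have "rel_cong n \<dots> (scalar a * gen_e + (gen_e * (gen_h + 2)) * hpoly ?p)"
    by (intro rel_cong_add rel_cong_refl rel_cong_mult_right cong_he)
  also have "scalar a * gen_e + (gen_e * (gen_h + 2)) * hpoly ?p = gen_e * hpoly (pcompose (pCons a p) [:2, 1:])"
    by (simp add: pcompose_pCons hpoly_add hpoly_mult hpoly_const hpoly_pCons scalar_numeral
        scalar_one scalar_commute scalar_zero hpoly_smult algebra_simps)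
  finally show ?case .
qed simp

lemma cong_hpoly_f: "rel_cong n (hpoly p * gen_f) (gen_f * hpoly (pcompose p [:-2, 1:]))"
proof (induction p rule: pCons_induct)
  case (pCons a p)
  let ?p = "pcompose p [:-2, 1:]"
  have "hpoly (pCons a p) * gen_f = scalar a * gen_f + gen_h * (hpoly p * gen_f)"
    by (simp add: hpoly_pCons algebra_simps)
  also have "rel_cong n \<dots> (scalar a * gen_f + (gen_h * gen_f) * hpoly ?p)"
    unfolding mult.assoc by (intro rel_cong_add rel_cong_refl rel_cong_mult_left pCons.IH)
  also have "rel_cong n \<dots> (scalar a * gen_f + (gen_f * (gen_h - 2)) * hpoly ?p)"
    by (intro rel_cong_add rel_cong_refl rel_cong_mult_right cong_hf)
  also have "scalar a * gen_f + (gen_f * (gen_h - 2)) * hpoly ?p = gen_f * hpoly (pcompose (pCons a p) [:-2, 1:])"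
  proof -
    have "pcompose (pCons a p) [:-2, 1:] = [:a:] + ([:0, 1:] - [:2:]) * ?p"
      by (simp add: pcompose_pCons)
    then have "gen_f * hpoly (pcompose (pCons a p) [:-2, 1:]) = gen_f * (scalar a + (gen_h - scalar 2) * hpoly ?p)"
      by (simp only: hpoly_add hpoly_mult hpoly_const hpoly_diff hpoly_X)
    then show ?thesis
      using scalar_commute[of a gen_f] by (simp add: scalar_numeral algebra_simps)
  qed
  finally show ?case .
qed simp

lemma cong_hpoly_e_pow: "rel_cong n (hpoly p * gen_e ^ c) (gen_e ^ c * hpoly (pcompose p [:of_nat (2 * c), 1:]))"
proof (induction c arbitrary: p)
  case 0
  then show ?case by (simp add: pcompose_idR)
next
  case (Suc c)
  let ?q = "pcompose p [:of_nat (2 * c), 1:]"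
  have "hpoly p * gen_e ^ Suc c = (hpoly p * gen_e ^ c) * gen_e"
    by (simp only: power_Suc2 mult.assoc)
  also have "rel_cong n \<dots> (gen_e ^ c * (hpoly ?q * gen_e))"
    unfolding mult.assoc[symmetric, of "gen_e ^ c"] by (intro rel_cong_mult_right Suc.IH)
  also have "rel_cong n \<dots> (gen_e ^ c * (gen_e * hpoly (pcompose ?q [:2, 1:])))"
    by (intro rel_cong_mult_left cong_hpoly_e)
  also have "gen_e ^ c * (gen_e * hpoly (pcompose ?q [:2, 1:])) = gen_e ^ Suc c * hpoly (pcompose p [:of_nat (2 * Suc c), 1:])"
    by (simp add: power_mult_commute pcompose_assoc[symmetric] pcompose_linear algebra_simps)
  finally show ?case .
qed

lemma cong_hpoly_f_pow: "rel_cong n (hpoly p * gen_f ^ a) (gen_f ^ a * hpoly (pcompose p [:- of_nat (2 * a), 1:]))"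
proof (induction a arbitrary: p)
  case 0
  then show ?case by (simp add: pcompose_idR)
next
  case (Suc a)
  let ?q = "pcompose p [:- of_nat (2 * a), 1:]"
  have "hpoly p * gen_f ^ Suc a = (hpoly p * gen_f ^ a) * gen_f"
    by (simp only: power_Suc2 mult.assoc)
  also have "rel_cong n \<dots> (gen_f ^ a * (hpoly ?q * gen_f))"
    unfolding mult.assoc[symmetric, of "gen_f ^ a"] by (intro rel_cong_mult_right Suc.IH)
  also have "rel_cong n \<dots> (gen_f ^ a * (gen_f * hpoly (pcompose ?q [:-2, 1:])))"
    by (intro rel_cong_mult_left cong_hpoly_f)
  also have "gen_f ^ a * (gen_f * hpoly (pcompose ?q [:-2, 1:])) = gen_f ^ Suc a * hpoly (pcompose p [:- of_nat (2 * Suc a), 1:])"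
    by (simp add: power_mult_commute pcompose_assoc[symmetric] pcompose_linear algebra_simps)
  finally show ?case .
qed

text \<open>Modulo the relations, the Casimir element makes \<open>f e\<close> and \<open>e f\<close> polynomials in \<open>h\<close>:
  \<open>f e = \<phi>(h)\<close> and \<open>e f = \<phi>(h - 2)\<close>, where \<open>\<phi>(t) = -(t + n + 2)(t - n)/4\<close>.\<close>

definition fe_poly :: "nat \<Rightarrow> 'k::field poly" where
  "fe_poly n = smult (1/4) [:of_nat (n * (n + 2)), -2, -1:]"

lemma fe_poly_pcompose:
  "pcompose (fe_poly n) [:c, 1:] =
     smult (- 1/4) ([:of_nat n + 2 + c, 1:] * [:c - of_nat n, 1:] :: 'k::field poly)"
  by (simp add: fe_poly_def pcompose_pCons algebra_simps)

lemma cong_fe: "rel_cong n (gen_f * gen_e) (hpoly (fe_poly n :: 'k::field_char_0 poly))"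
proof -
  let ?\<phi> = "fe_poly n :: 'k poly"
  have "hpoly (smult 4 ?\<phi>) = hpoly [:of_nat (n * (n + 2)), -2, -1:]"
    unfolding fe_poly_def smult_smult by simp
  also have "\<dots> = scalar (of_nat (n * (n + 2))) + gen_h * (scalar (-2) + gen_h * scalar (-1))"
    by (simp only: hpoly_pCons hpoly_0 mult_zero_right add_0_right)
  also have "\<dots> = of_nat (n * (n + 2)) - 2 * gen_h - gen_h * gen_h"
    by (simp only: scalar_of_nat scalar_uminus scalar_numeral scalar_one)
      (simp add: algebra_simps numeral_mult_commute)
  finally have \<phi>: "hpoly (smult 4 ?\<phi>) = of_nat (n * (n + 2)) - 2 * gen_h - gen_h * gen_h" .
  have four: "4 * x = 2 * x + 2 * (x :: 'k freealg)" for x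
    by (metis distrib_right numeral_Bit0)
  have "(gen_h * gen_h + 2 * (gen_e * gen_f + gen_f * gen_e) - of_nat (n * (n + 2))) -
      2 * (gen_e * gen_f - gen_f * gen_e - gen_h) = 4 * (gen_f * gen_e) - hpoly (smult 4 ?\<phi>)"
    unfolding \<phi> by (simp add: algebra_simps four)
  also have "\<dots> = scalar 4 * (gen_f * gen_e - hpoly ?\<phi>)"
    by (simp add: hpoly_smult scalar_numeral algebra_simps)
  finally have "scalar 4 * (gen_f * gen_e - hpoly ?\<phi>) \<in> rel_ideal n"
    by (metis relators_in_rel_ideal rel_ideal_diff rel_ideal_mult_left insertCI relators_def)
  then show ?thesis
    unfolding rel_cong_def by (rule rel_ideal_scalar_cancel) simp
qed

lemma cong_ef: "rel_cong n (gen_e * gen_f) (hpoly (pcompose (fe_poly n) [:-2, 1:] :: 'k::field_char_0 poly))"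
proof -
  have "rel_cong n (gen_e * gen_f) (gen_f * gen_e + gen_h)"
    by (rule cong_ef_fe)
  also have "rel_cong n \<dots> (hpoly (fe_poly n :: 'k poly) + hpoly [:0, 1:])"
    unfolding hpoly_X by (intro rel_cong_add cong_fe rel_cong_refl)
  also have "hpoly (fe_poly n) + hpoly [:0, 1:] = hpoly (pcompose (fe_poly n) [:-2, 1:] :: 'k poly)"
    by (simp add: fe_poly_def pcompose_pCons hpoly_add[symmetric] algebra_simps)
  finally show ?thesis .
qed

lemma cong_f_e_pow_hpoly:
  "rel_cong n (gen_f * (gen_e ^ Suc k * hpoly p))
     (gen_e ^ k * hpoly (pcompose (fe_poly n) [:of_nat (2 * k), 1:] * (p :: 'k::field_char_0 poly)))"
proof -
  have "gen_f * (gen_e ^ Suc k * hpoly p) = (gen_f * gen_e) * gen_e ^ k * hpoly p"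
    by (simp add: mult.assoc)
  also have "rel_cong n \<dots> (hpoly (fe_poly n) * gen_e ^ k * hpoly p)"
    by (intro rel_cong_mult_right cong_fe)
  also have "rel_cong n \<dots> (gen_e ^ k * hpoly (pcompose (fe_poly n) [:of_nat (2 * k), 1:]) * hpoly p)"
    by (intro rel_cong_mult_right cong_hpoly_e_pow)
  finally show ?thesis
    by (simp add: hpoly_mult mult.assoc)
qed

lemma cong_e_pow_hpoly_f:
  "rel_cong n (gen_e ^ Suc k * hpoly p * gen_f)
     (gen_e ^ k * hpoly (pcompose (fe_poly n * p) [:-2, 1:] :: 'k::field_char_0 poly))"
proof -
  have "gen_e ^ Suc k * hpoly p * gen_f = gen_e ^ Suc k * (hpoly p * gen_f)"
    by (simp add: mult.assoc)
  also have "rel_cong n \<dots> (gen_e ^ k * (gen_e * gen_f) * hpoly (pcompose p [:-2, 1:]))"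
    unfolding power_Suc2 mult.assoc by (intro rel_cong_mult_left cong_hpoly_f)
  also have "rel_cong n \<dots> (gen_e ^ k * hpoly (pcompose (fe_poly n) [:-2, 1:]) * hpoly (pcompose p [:-2, 1:]))"
    by (intro rel_cong_mult_left rel_cong_mult_right cong_ef)
  finally show ?thesis
    by (simp add: hpoly_mult pcompose_mult mult.assoc)
qed

lemma cong_e_f_pow_hpoly:
  "rel_cong n (gen_e * (gen_f ^ Suc b * hpoly q))
     (gen_f ^ b * hpoly (pcompose (pcompose (fe_poly n) [:-2, 1:]) [:- of_nat (2 * b), 1:] *
       (q :: 'k::field_char_0 poly)))"
proof -
  have "gen_e * (gen_f ^ Suc b * hpoly q) = (gen_e * gen_f) * gen_f ^ b * hpoly q"
    by (simp add: mult.assoc)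
  also have "rel_cong n \<dots> (hpoly (pcompose (fe_poly n) [:-2, 1:]) * gen_f ^ b * hpoly q)"
    by (intro rel_cong_mult_right cong_ef)
  also have "rel_cong n \<dots>
      (gen_f ^ b * hpoly (pcompose (pcompose (fe_poly n) [:-2, 1:]) [:- of_nat (2 * b), 1:]) * hpoly q)"
    by (intro rel_cong_mult_right cong_hpoly_f_pow)
  finally show ?thesis
    by (simp add: hpoly_mult mult.assoc)
qed

section \<open>Polynomials in h that kill powers of e and f\<close>

definition h_eigenvalue :: "nat \<Rightarrow> nat \<Rightarrow> 'k::comm_ring_1" where
  "h_eigenvalue n m = of_nat (2 * m) - of_nat n"

definition eigen_poly :: "nat \<Rightarrow> nat set \<Rightarrow> 'k::comm_ring_1 poly" where
  "eigen_poly n A = (\<Prod>m\<in>A. [:- h_eigenvalue n m, 1:])"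

lemma inj_on_h_eigenvalue: "inj_on (h_eigenvalue n :: nat \<Rightarrow> 'k::field_char_0) A"
  by (rule inj_onI) (simp add: h_eigenvalue_def)

lemma eigen_poly_shift: "pcompose (eigen_poly n A) [:-2, 1:] = (eigen_poly n (Suc ` A) :: 'k::comm_ring_1 poly)"
  unfolding eigen_poly_def pcompose_prod prod.reindex[OF inj_on_subset[OF inj_Suc subset_UNIV]] o_def
  by (intro prod.cong refl) (simp add: pcompose_pCons h_eigenvalue_def algebra_simps)

lemma eigen_poly_lessThan_Suc:
  "eigen_poly n {..<Suc m} = eigen_poly n {..<m} * [:- h_eigenvalue n m, 1:]"
  by (simp add: eigen_poly_def)

lemma eigen_poly_lessThan_Suc_shift:
  "eigen_poly n {..<Suc m} = [:- h_eigenvalue n 0, 1:] * pcompose (eigen_poly n {..<m}) [:-2, 1:]"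
  by (simp only: lessThan_Suc_eq_insert_0 eigen_poly_shift) (simp add: eigen_poly_def)

lemma eigen_poly_atLeastAtMost_Suc:
  "a \<le> n \<Longrightarrow> eigen_poly n {a..n} = [:- h_eigenvalue n a, 1:] * eigen_poly n {Suc a..n}"
  by (simp add: eigen_poly_def Icc_eq_insert_lb_nat)

lemma eigen_poly_atLeastAtMost_shift:
  "a \<le> n \<Longrightarrow> pcompose (eigen_poly n {a..n}) [:-2, 1:] =
     eigen_poly n {Suc a..n} * ([:- h_eigenvalue n (Suc n), 1:] :: 'k::comm_ring_1 poly)"
  by (simp only: eigen_poly_shift image_Suc_atLeastAtMost) (simp add: eigen_poly_def prod.cl_ivl_Suc)

lemma eigen_poly_dvd:
  assumes "finite A" "\<And>m. m \<in> A \<Longrightarrow> poly p (h_eigenvalue n m) = 0"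
  shows "eigen_poly n A dvd (p :: 'k::field_char_0 poly)"
  using prod_linear_factors_dvd[OF assms(1) inj_on_h_eigenvalue assms(2)] unfolding eigen_poly_def .

text \<open>Multiplying \<open>e\<^sup>k\<^sup>+\<^sup>1 r(h)\<close> by \<open>f\<close> on the left and on the right gives two elements
  \<open>e\<^sup>k a(h)\<close> and \<open>e\<^sup>k b(h)\<close>; the difference \<open>a - b\<close> is a nonzero multiple of \<open>r\<close> times one
  more linear factor.\<close>

lemma e_step_poly:
  assumes "k \<le> n"
  shows "pcompose (fe_poly n) [:of_nat (2 * k), 1:] * eigen_poly n {..<n - k} -
      pcompose (fe_poly n * eigen_poly n {..<n - k}) [:-2, 1:] =
    smult (- of_nat (n + k + 2) / 2) (eigen_poly n {..<Suc n - k} :: 'k::field_char_0 poly)"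
proof -
  let ?R = "eigen_poly n {..<n - k} :: 'k poly" and ?r = "eigen_poly n {..<Suc n - k} :: 'k poly"
  have last: "?r = ?R * [:of_nat (2 * k) - of_nat n, 1:]"
    using assms by (simp add: Suc_diff_le eigen_poly_lessThan_Suc h_eigenvalue_def of_nat_diff)
  have first: "?r = [:of_nat n, 1:] * pcompose ?R [:-2, 1:]"
    using assms by (simp add: Suc_diff_le eigen_poly_lessThan_Suc_shift h_eigenvalue_def)
  have "pcompose (fe_poly n) [:of_nat (2 * k), 1:] * ?R =
      smult (- 1/4) ([:of_nat n + 2 + of_nat (2 * k), 1:] * ?r)"
    unfolding fe_poly_pcompose last by (simp only: mult_smult_left mult_smult_right ac_simps)
  moreover have "pcompose (fe_poly n * ?R) [:-2, 1:] = smult (- 1/4) ([:-2 - of_nat n, 1:] * ?r)"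
  proof -
    have "pcompose (fe_poly n) [:-2, 1:] = smult (- 1/4) ([:of_nat n, 1:] * [:-2 - of_nat n, 1 :: 'k:])"
      using fe_poly_pcompose[of n "-2 :: 'k"] by simp
    then show ?thesis
      unfolding pcompose_mult first by (simp only: mult_smult_left mult_smult_right ac_simps)
  qed
  ultimately have "pcompose (fe_poly n) [:of_nat (2 * k), 1:] * ?R - pcompose (fe_poly n * ?R) [:-2, 1:] =
      smult (- 1/4) (([:of_nat n + 2 + of_nat (2 * k), 1:] - [:-2 - of_nat n, 1:]) * ?r)"
    by (simp only: smult_diff_right left_diff_distrib)
  also have "[:of_nat n + 2 + of_nat (2 * k), 1:] - [:-2 - of_nat n, 1:] = [:2 * of_nat (n + k + 2) :: 'k:]"
    by simp
  also have "smult (- 1/4) ([:2 * of_nat (n + k + 2):] * ?r) = smult (- 1/4 * (2 * of_nat (n + k + 2))) ?r"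
    by simp
  also have "- 1/4 * (2 * of_nat (n + k + 2)) = (- of_nat (n + k + 2) / 2 :: 'k)"
    by (simp add: field_simps)
  finally show ?thesis .
qed

lemma e_pow_eigen_poly_step:
  assumes k: "k \<le> n"
    and X: "gen_e ^ Suc k * hpoly (eigen_poly n {..<n - k} :: 'k::field_char_0 poly) \<in> rel_ideal n"
  shows "gen_e ^ k * hpoly (eigen_poly n {..<Suc n - k} :: 'k poly) \<in> rel_ideal n"
proof -
  let ?R = "eigen_poly n {..<n - k} :: 'k poly"
  have "gen_e ^ k * hpoly (pcompose (fe_poly n) [:of_nat (2 * k), 1:] * ?R) \<in> rel_ideal n"
    by (rule rel_cong_rel_ideal[OF cong_f_e_pow_hpoly rel_ideal_mult_left[OF X]])
  moreover have "gen_e ^ k * hpoly (pcompose (fe_poly n * ?R) [:-2, 1:]) \<in> rel_ideal n"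
    by (rule rel_cong_rel_ideal[OF cong_e_pow_hpoly_f rel_ideal_mult_right[OF X]])
  ultimately have "gen_e ^ k * hpoly (pcompose (fe_poly n) [:of_nat (2 * k), 1:] * ?R) -
      gen_e ^ k * hpoly (pcompose (fe_poly n * ?R) [:-2, 1:]) \<in> rel_ideal n"
    by (rule rel_ideal_diff)
  then have "scalar (- of_nat (n + k + 2) / 2 :: 'k) * (gen_e ^ k * hpoly (eigen_poly n {..<Suc n - k})) \<in> rel_ideal n"
    by (simp only: right_diff_distrib[symmetric] hpoly_diff[symmetric] e_step_poly[OF k] hpoly_smult
        scalar_mult_left_commute)
  then show ?thesis
    by (rule rel_ideal_scalar_cancel) (simp only: divide_eq_0_iff neg_equal_0_iff_equal of_nat_eq_0_iff, simp)
qed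

lemma e_pow_eigen_poly_in_rel_ideal:
  "k \<le> Suc n \<Longrightarrow> gen_e ^ k * hpoly (eigen_poly n {..<Suc n - k} :: 'k::field_char_0 poly) \<in> rel_ideal n"
proof (induction "Suc n - k" arbitrary: k)
  case 0
  then have "k = Suc n" by simp
  then show ?case
    by (simp add: eigen_poly_def hpoly_one e_pow_in_rel_ideal del: power_Suc)
next
  case (Suc d)
  then have "k \<le> n"
    by simp
  moreover have "gen_e ^ Suc k * hpoly (eigen_poly n {..<n - k} :: 'k poly) \<in> rel_ideal n"
    using Suc.hyps(1)[of "Suc k"] Suc.hyps(2) by simp
  ultimately show ?case
    by (rule e_pow_eigen_poly_step)
qed

lemma f_pow_eigen_poly_step:
  assumes a: "a \<le> n"
    and Y: "gen_f ^ a * hpoly (eigen_poly n {a..n} :: 'k::field_char_0 poly) \<in> rel_ideal n"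
  shows "gen_f ^ Suc a * hpoly (eigen_poly n {Suc a..n} :: 'k poly) \<in> rel_ideal n"
proof -
  let ?S = "eigen_poly n {Suc a..n} :: 'k poly"
  have left: "gen_f ^ Suc a * hpoly ([:- h_eigenvalue n a, 1:] * ?S) = gen_f * (gen_f ^ a * hpoly (eigen_poly n {a..n} :: 'k poly))"
    using a by (simp add: eigen_poly_atLeastAtMost_Suc mult.assoc)
  have "gen_f ^ Suc a * hpoly ([:- h_eigenvalue n a, 1:] * ?S) \<in> rel_ideal n"
    unfolding left by (rule rel_ideal_mult_left[OF Y])
  moreover have "gen_f ^ Suc a * hpoly (?S * [:- h_eigenvalue n (Suc n), 1:]) \<in> rel_ideal n"
  proof -
    have "gen_f ^ a * hpoly (eigen_poly n {a..n}) * gen_f = gen_f ^ a * (hpoly (eigen_poly n {a..n}) * gen_f)"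
      by (simp only: mult.assoc)
    also have "rel_cong n \<dots> (gen_f ^ a * (gen_f * hpoly (pcompose (eigen_poly n {a..n}) [:-2, 1:])))"
      by (intro rel_cong_mult_left cong_hpoly_f)
    also have "\<dots> = gen_f ^ Suc a * hpoly (?S * [:- h_eigenvalue n (Suc n), 1:])"
      using a by (simp only: eigen_poly_atLeastAtMost_shift power_Suc2 mult.assoc)
    finally show ?thesis
      using rel_ideal_mult_right[OF Y] by (rule rel_cong_rel_ideal)
  qed
  ultimately have "gen_f ^ Suc a * hpoly ([:- h_eigenvalue n a, 1:] * ?S) -
      gen_f ^ Suc a * hpoly (?S * [:- h_eigenvalue n (Suc n), 1:]) \<in> rel_ideal n"
    by (rule rel_ideal_diff)
  moreover have "[:- h_eigenvalue n a, 1:] * ?S - ?S * [:- h_eigenvalue n (Suc n), 1:] =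
      smult (h_eigenvalue n (Suc n) - h_eigenvalue n a) ?S"
    by (simp add: algebra_simps smult_diff_left)
  ultimately have "scalar (h_eigenvalue n (Suc n) - h_eigenvalue n a) * (gen_f ^ Suc a * hpoly ?S) \<in> rel_ideal n"
    by (simp only: right_diff_distrib[symmetric] hpoly_diff[symmetric] hpoly_smult scalar_mult_left_commute)
  moreover have "h_eigenvalue n (Suc n) - h_eigenvalue n a \<noteq> (0 :: 'k)"
    using a inj_onD[OF inj_on_h_eigenvalue[of n UNIV], of "Suc n" a] by auto
  ultimately show ?thesis
    by (rule rel_ideal_scalar_cancel)
qed

lemma f_pow_eigen_poly_in_rel_ideal:
  "a \<le> Suc n \<Longrightarrow> gen_f ^ a * hpoly (eigen_poly n {a..n} :: 'k::field_char_0 poly) \<in> rel_ideal n"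
proof (induction a)
  case 0
  then show ?case
    using e_pow_eigen_poly_in_rel_ideal[of 0 n] by (simp add: atLeast0AtMost lessThan_Suc_atMost)
next
  case (Suc a)
  then show ?case using f_pow_eigen_poly_step[of a n] by simp
qed

lemma f_pow_in_rel_ideal: "gen_f ^ Suc n \<in> (rel_ideal n :: 'k::field_char_0 freealg set)"
  using f_pow_eigen_poly_in_rel_ideal[of "Suc n" n, where 'k='k] by (simp add: eigen_poly_def hpoly_one)

section \<open>A spanning set modulo the relations\<close>

definition normal_sum :: "nat \<Rightarrow> (nat \<Rightarrow> 'k::comm_ring_1 poly) \<Rightarrow> (nat \<Rightarrow> 'k poly) \<Rightarrow> 'k freealg" where
  "normal_sum n P Q = (\<Sum>c\<le>n. gen_e ^ c * hpoly (P c)) + (\<Sum>a\<le>n. gen_f ^ a * hpoly (Q a))"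

definition has_normal_form :: "nat \<Rightarrow> 'k::comm_ring_1 freealg \<Rightarrow> bool" where
  "has_normal_form n x \<longleftrightarrow> (\<exists>P Q. rel_cong n x (normal_sum n P Q))"

lemma has_normal_form_zero: "has_normal_form n 0"
  unfolding has_normal_form_def
  by (rule exI[of _ "\<lambda>_. 0"], rule exI[of _ "\<lambda>_. 0"]) (simp add: normal_sum_def)

lemma has_normal_form_add:
  assumes "has_normal_form n x" "has_normal_form n y"
  shows "has_normal_form n (x + y)"
proof -
  obtain P Q P' Q' where "rel_cong n x (normal_sum n P Q)" "rel_cong n y (normal_sum n P' Q')"
    using assms unfolding has_normal_form_def by blast
  then have "rel_cong n (x + y) (normal_sum n (\<lambda>i. P i + P' i) (\<lambda>i. Q i + Q' i))"
    using rel_cong_add by (fastforce simp: normal_sum_def hpoly_add distrib_left sum.distrib algebra_simps)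
  then show ?thesis
    unfolding has_normal_form_def by blast
qed

lemma has_normal_form_sum: "(\<And>a. a \<in> A \<Longrightarrow> has_normal_form n (f a)) \<Longrightarrow> has_normal_form n (sum f A)"
  by (induction A rule: infinite_finite_induct) (auto intro: has_normal_form_add has_normal_form_zero)

lemma has_normal_form_rel_cong: "rel_cong n x y \<Longrightarrow> has_normal_form n y \<Longrightarrow> has_normal_form n x"
  unfolding has_normal_form_def by (meson rel_cong_trans)

lemma has_normal_form_e_pow:
  assumes "c \<le> Suc n"
  shows "has_normal_form n (gen_e ^ c * hpoly (p :: 'k::field_char_0 poly))"
proof (cases "c = Suc n")
  case True
  then have "rel_cong n (gen_e ^ c * hpoly p) 0"
    by (simp add: rel_cong_def rel_ideal_mult_right e_pow_in_rel_ideal del: power_Suc)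
  then show ?thesis
    using has_normal_form_zero by (rule has_normal_form_rel_cong)
next
  case False
  then have "gen_e ^ c * hpoly p = normal_sum n (\<lambda>i. if i = c then p else 0) (\<lambda>_. 0)"
    using assms by (simp add: normal_sum_def if_distrib[of hpoly] if_distrib[of "\<lambda>y. _ * y"] cong: if_cong)
  then show ?thesis
    unfolding has_normal_form_def by (metis rel_cong_refl)
qed

lemma has_normal_form_f_pow:
  assumes "a \<le> Suc n"
  shows "has_normal_form n (gen_f ^ a * hpoly (q :: 'k::field_char_0 poly))"
proof (cases "a = Suc n")
  case True
  then have "rel_cong n (gen_f ^ a * hpoly q) 0"
    by (simp add: rel_cong_def rel_ideal_mult_right f_pow_in_rel_ideal del: power_Suc)
  then show ?thesis
    using has_normal_form_zero by (rule has_normal_form_rel_cong)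
next
  case False
  then have "gen_f ^ a * hpoly q = normal_sum n (\<lambda>_. 0) (\<lambda>i. if i = a then q else 0)"
    using assms by (simp add: normal_sum_def if_distrib[of hpoly] if_distrib[of "\<lambda>y. _ * y"] cong: if_cong)
  then show ?thesis
    unfolding has_normal_form_def by (metis rel_cong_refl)
qed

lemma has_normal_form_mult_left:
  assumes e: "\<And>c p. c \<le> n \<Longrightarrow> has_normal_form n (z * (gen_e ^ c * hpoly p))"
    and f: "\<And>a q. a \<le> n \<Longrightarrow> has_normal_form n (z * (gen_f ^ a * hpoly q))"
    and x: "has_normal_form n x"
  shows "has_normal_form n (z * x)"
proof -
  obtain P Q where "rel_cong n x (normal_sum n P Q)"
    using x unfolding has_normal_form_def by blast
  then have "rel_cong n (z * x) (z * normal_sum n P Q)"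
    by (rule rel_cong_mult_left)
  moreover have "has_normal_form n (z * normal_sum n P Q)"
    unfolding normal_sum_def distrib_left sum_distrib_left
    by (intro has_normal_form_add has_normal_form_sum e f) auto
  ultimately show ?thesis
    by (rule has_normal_form_rel_cong)
qed

lemma has_normal_form_mult_gen_h:
  "has_normal_form n x \<Longrightarrow> has_normal_form n (gen_h * (x :: 'k::field_char_0 freealg))"
proof (rule has_normal_form_mult_left)
  fix c and p :: "'k poly" assume c: "c \<le> n"
  have "gen_h * (gen_e ^ c * hpoly p) = hpoly [:0, 1:] * gen_e ^ c * hpoly p"
    by (simp add: hpoly_X mult.assoc)
  also have "rel_cong n \<dots> (gen_e ^ c * hpoly (pcompose [:0, 1:] [:of_nat (2 * c), 1:]) * hpoly p)"
    by (intro rel_cong_mult_right cong_hpoly_e_pow)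
  finally show "has_normal_form n (gen_h * (gen_e ^ c * hpoly p))"
    using c by (simp add: mult.assoc has_normal_form_rel_cong has_normal_form_e_pow flip: hpoly_mult)
next
  fix a and q :: "'k poly" assume a: "a \<le> n"
  have "gen_h * (gen_f ^ a * hpoly q) = hpoly [:0, 1:] * gen_f ^ a * hpoly q"
    by (simp add: hpoly_X mult.assoc)
  also have "rel_cong n \<dots> (gen_f ^ a * hpoly (pcompose [:0, 1:] [:- of_nat (2 * a), 1:]) * hpoly q)"
    by (intro rel_cong_mult_right cong_hpoly_f_pow)
  finally show "has_normal_form n (gen_h * (gen_f ^ a * hpoly q))"
    using a by (simp add: mult.assoc has_normal_form_rel_cong has_normal_form_f_pow flip: hpoly_mult)
qed

lemma has_normal_form_mult_gen_e:
  "has_normal_form n x \<Longrightarrow> has_normal_form n (gen_e * (x :: 'k::field_char_0 freealg))"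
proof (rule has_normal_form_mult_left)
  fix c and p :: "'k poly" assume "c \<le> n"
  then show "has_normal_form n (gen_e * (gen_e ^ c * hpoly p))"
    using has_normal_form_e_pow[of "Suc c" n p] by (simp add: mult.assoc)
next
  fix a and q :: "'k poly" assume a: "a \<le> n"
  show "has_normal_form n (gen_e * (gen_f ^ a * hpoly q))"
  proof (cases a)
    case 0
    then show ?thesis
      using has_normal_form_e_pow[of 1 n q] by simp
  next
    case (Suc b)
    show ?thesis
      unfolding Suc
      by (rule has_normal_form_rel_cong[OF cong_e_f_pow_hpoly has_normal_form_f_pow]) (use a Suc in simp)
  qed
qed

lemma has_normal_form_mult_gen_f:
  "has_normal_form n x \<Longrightarrow> has_normal_form n (gen_f * (x :: 'k::field_char_0 freealg))"
proof (rule has_normal_form_mult_left)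
  fix a and q :: "'k poly" assume "a \<le> n"
  then show "has_normal_form n (gen_f * (gen_f ^ a * hpoly q))"
    using has_normal_form_f_pow[of "Suc a" n q] by (simp add: mult.assoc)
next
  fix c and p :: "'k poly" assume c: "c \<le> n"
  show "has_normal_form n (gen_f * (gen_e ^ c * hpoly p))"
  proof (cases c)
    case 0
    then show ?thesis
      using has_normal_form_f_pow[of 1 n p] by simp
  next
    case (Suc b)
    show ?thesis
      unfolding Suc
      by (rule has_normal_form_rel_cong[OF cong_f_e_pow_hpoly has_normal_form_e_pow]) (use c Suc in simp)
  qed
qed

lemma has_normal_form_mult_scalar:
  "has_normal_form n x \<Longrightarrow> has_normal_form n (scalar d * (x :: 'k::field_char_0 freealg))"
proof (rule has_normal_form_mult_left)
  fix c and p :: "'k poly" assume "c \<le> n"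
  then show "has_normal_form n (scalar d * (gen_e ^ c * hpoly p))"
    using has_normal_form_e_pow[of c n "smult d p"] by (simp add: hpoly_smult scalar_mult_left_commute)
next
  fix a and q :: "'k poly" assume "a \<le> n"
  then show "has_normal_form n (scalar d * (gen_f ^ a * hpoly q))"
    using has_normal_form_f_pow[of a n "smult d q"] by (simp add: hpoly_smult scalar_mult_left_commute)
qed

lemma has_normal_form_word: "has_normal_form n (word w :: 'k::field_char_0 freealg)"
proof (induction w)
  case Nil
  then show ?case
    using has_normal_form_e_pow[of 0 n "1 :: 'k poly"] by (simp add: word_Nil hpoly_one)
next
  case (Cons g w)
  have "word (g # w) = word [g] * (word w :: 'k freealg)"
    using word_append[of "[g]" w] by simp
  then show ?case
    by (cases g) (simp_all add: Cons.IH has_normal_form_mult_gen_e has_normal_form_mult_gen_h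
        has_normal_form_mult_gen_f flip: gen_e_def gen_h_def gen_f_def)
qed

lemma has_normal_form: "has_normal_form n (x :: 'k::field_char_0 freealg)"
  by (subst freealg_expansion[OF finite_fsupp order_refl])
    (intro has_normal_form_sum has_normal_form_mult_scalar has_normal_form_word)

lemma eval_op_gen: "eval_op n (word [g]) = (gen_op n g :: 'k::field poly \<Rightarrow> _)"
proof
  fix p :: "'k poly"
  show "eval_op n (word [g]) p = gen_op n g p"
    by (cases "p \<in> On n")
      (simp_all add: eval_op_word Idn_in Idn_out gen_op_out End_zero[OF End_gen_op] del: gen_op.simps)
qed

lemma eval_op_gen_e: "eval_op n gen_e = (gen_op n E :: 'k::field poly \<Rightarrow> _)"
  unfolding gen_e_def by (rule eval_op_gen)

lemma eval_op_gen_h: "eval_op n gen_h = (gen_op n H :: 'k::field poly \<Rightarrow> _)"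
  unfolding gen_h_def by (rule eval_op_gen)

lemma eval_op_gen_f: "eval_op n gen_f = (gen_op n F :: 'k::field poly \<Rightarrow> _)"
  unfolding gen_f_def by (rule eval_op_gen)

lemma eval_op_e_pow_monom: "m \<le> n \<Longrightarrow>
   eval_op n (gen_e ^ c) (monom b m) = (if m + c \<le> n then monom b (m + c) else (0 :: 'k::field poly))"
  by (induction c)
    (auto simp: eval_op_one Idn_in eval_op_mult eval_op_gen_e gen_op_E_monom End_zero[OF End_gen_op]
      simp del: gen_op.simps)

definition f_pow_coeff :: "nat \<Rightarrow> nat \<Rightarrow> nat \<Rightarrow> 'k::comm_ring_1" where
  "f_pow_coeff n a m = (\<Prod>i<a. of_nat (m - i) * (of_nat n - of_nat (m - i - 1)))"

lemma f_pow_coeff_Suc: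
  "f_pow_coeff n (Suc a) m = of_nat m * (of_nat n - of_nat (m - 1)) * f_pow_coeff n a (m - 1)"
  unfolding f_pow_coeff_def by (simp only: prod.lessThan_Suc_shift diff_Suc_eq_diff_pred diff_zero)

lemma f_pow_coeff_nonzero:
  assumes "a \<le> m" "m \<le> n"
  shows "f_pow_coeff n a m \<noteq> (0::'k::field_char_0)"
proof -
  have "of_nat (m - i) * (of_nat n - of_nat (m - i - 1)) \<noteq> (0::'k)" if "i < a" for i
    using that assms by (simp flip: of_nat_diff)
  then show ?thesis
    unfolding f_pow_coeff_def by simp
qed

lemma eval_op_f_pow_monom: "m \<le> n \<Longrightarrow>
   eval_op n (gen_f ^ a) (monom b m) =
     (if a \<le> m then monom (f_pow_coeff n a m * b) (m - a) else (0 :: 'k::field poly))"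
proof (induction a arbitrary: m b)
  case 0
  then show ?case by (simp add: eval_op_one Idn_in f_pow_coeff_def)
next
  case (Suc a)
  have "eval_op n (gen_f ^ Suc a) (monom b m) =
      eval_op n (gen_f ^ a) (monom (of_nat m * (of_nat n - of_nat (m - 1)) * b) (m - 1))"
    using Suc.prems by (simp add: power_Suc2 eval_op_mult eval_op_gen_f gen_op_F_monom del: gen_op.simps power_Suc)
  also have "\<dots> = (if Suc a \<le> m then monom (f_pow_coeff n (Suc a) m * b) (m - Suc a) else 0)"
    using Suc.IH[of "m - 1"] Suc.prems
    by (cases m) (simp_all add: End_zero[OF End_eval_op] f_pow_coeff_Suc algebra_simps)
  finally show ?case .
qed

lemma eval_op_hpoly_monom: "m \<le> n \<Longrightarrow>
   eval_op n (hpoly p) (monom b m) = (monom (poly p (h_eigenvalue n m) * b) m :: 'k::field poly)"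
  by (induction p rule: pCons_induct)
    (simp_all add: eval_op_zero hpoly_pCons eval_op_add eval_op_scalar eval_op_mult eval_op_gen_h
      gen_op_H_monom Idn_in h_eigenvalue_def smult_monom algebra_simps add_monom del: gen_op.simps)

lemma eval_op_eq_zeroI:
  "(\<And>m. m \<le> n \<Longrightarrow> eval_op n x (monom 1 m) = 0) \<Longrightarrow> eval_op n x = (\<lambda>_. 0 :: 'k::field poly)"
  by (rule End_eqI[OF End_eval_op End_zero_op]) auto

lemma eval_op_relators:
  assumes "r \<in> relators n"
  shows "eval_op n r = (\<lambda>_. 0 :: 'k::field poly)"
proof (rule eval_op_eq_zeroI)
  fix m assume m: "m \<le> n"
  note eval_simps = eval_op_diff eval_op_add eval_op_mult eval_op_scalar_mult eval_op_scalar
    eval_op_gen_e eval_op_gen_h eval_op_gen_f eval_op_e_pow_monom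
  note monom_simps = gen_op_monom End_zero[OF End_gen_op] add_monom diff_monom minus_monom
    smult_monom Idn_in of_nat_diff
  from assms m show "eval_op n r (monom 1 m) = 0"
    unfolding relators_def insert_iff empty_iff scalar_numeral[symmetric] scalar_of_nat[symmetric]
    by (elim disjE FalseE; simp only:; cases m)
      (auto simp: eval_simps monom_simps algebra_simps simp del: gen_op.simps monom_eq_1)
qed

section \<open>The kernel of the representation\<close>

lemma fa_ideal_fa_eval_zero:
  assumes "\<forall>g\<in>S. fin_supp g \<and> fa_eval n g = (\<lambda>_. 0 :: 'k::field poly)"
    and "a \<in> fa_ideal S"
  shows "fin_supp a \<and> fa_eval n a = (\<lambda>_. 0)"
  using assms(2)
proof (induction rule: fa_ideal.induct)
  case zero
  then show ?case
    by (simp add: fin_supp_def fa_eval_def fa_zero_def)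
next
  case (add a b)
  then have "fa_add a b = Rep_freealg (Abs_freealg a + Abs_freealg b)"
    by (simp add: Rep_freealg_plus Abs_freealg_inverse)
  moreover have "eval_op n (Abs_freealg a) = fa_eval n a" "eval_op n (Abs_freealg b) = fa_eval n b"
    using add by (simp_all add: eval_op_def Abs_freealg_inverse)
  then have "eval_op n (Abs_freealg a + Abs_freealg b) = (\<lambda>_. 0)"
    using add by (simp add: eval_op_add fun_eq_iff)
  ultimately show ?case
    using Rep_freealg by (metis eval_op_def mem_Collect_eq)
next
  case (mul a u v)
  then have "fa_mul (fa_mul u a) v = Rep_freealg (Abs_freealg u * Abs_freealg a * Abs_freealg v)"
    by (simp add: Rep_freealg_times Abs_freealg_inverse)
  moreover have "eval_op n (Abs_freealg a) = fa_eval n a"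
    using mul by (simp add: eval_op_def Abs_freealg_inverse)
  then have "eval_op n (Abs_freealg u * Abs_freealg a * Abs_freealg v) = (\<lambda>_. 0)"
    using mul by (simp add: eval_op_mult fun_eq_iff End_zero[OF End_eval_op])
  ultimately show ?case
    using Rep_freealg by (metis eval_op_def mem_Collect_eq)
qed (use assms(1) in blast)

lemma rel_ideal_eval_op_zero: "x \<in> rel_ideal n \<Longrightarrow> eval_op n x = (\<lambda>_. 0 :: 'k::field poly)"
  using fa_ideal_fa_eval_zero[of "Rep_freealg ` relators n" n "Rep_freealg x"] Rep_freealg
  by (auto simp: rel_ideal_def eval_op_def[symmetric] eval_op_relators)

lemma coeff_eval_op_normal_sum:
  assumes "m \<le> n"
  shows "coeff (eval_op n (normal_sum n P Q) (monom 1 m)) j =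
    (\<Sum>c\<le>n. if m + c \<le> n \<and> j = m + c then poly (P c) (h_eigenvalue n m) else 0) +
    (\<Sum>a\<le>n. if a \<le> m \<and> j = m - a then f_pow_coeff n a m * poly (Q a) (h_eigenvalue n m) else (0::'k::field))"
  unfolding normal_sum_def eval_op_add eval_op_sum coeff_add coeff_sum
  using assms
  by (simp add: eval_op_mult eval_op_hpoly_monom eval_op_e_pow_monom eval_op_f_pow_monom coeff_monom
      if_distrib[of "\<lambda>p. coeff p j"])
    (intro arg_cong2[where f="(+)"] sum.cong refl; auto)

context
  fixes n :: nat and P Q :: "nat \<Rightarrow> 'k::field_char_0 poly"
  assumes zero: "eval_op n (normal_sum n P Q) = (\<lambda>_. 0)"
begin

lemma normal_sum_coeff_sum_eq_zero:
  assumes "m \<le> n"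
  shows "(\<Sum>c\<le>n. if m + c \<le> n \<and> j = m + c then poly (P c) (h_eigenvalue n m) else 0) +
    (\<Sum>a\<le>n. if a \<le> m \<and> j = m - a then f_pow_coeff n a m * poly (Q a) (h_eigenvalue n m) else 0) = 0"
  using coeff_eval_op_normal_sum[OF assms, of P Q j] zero by simp

lemma normal_sum_e_roots:
  assumes "0 < c" "m + c \<le> n"
  shows "poly (P c) (h_eigenvalue n m) = 0"
proof -
  let ?t = "h_eigenvalue n m :: 'k"
  have "(\<Sum>c'\<le>n. if m + c' \<le> n \<and> m + c = m + c' then poly (P c') ?t else 0) = poly (P c) ?t"
    by (rule sum_if_unique) (use assms in auto)
  moreover have "(\<Sum>a\<le>n. if a \<le> m \<and> m + c = m - a then f_pow_coeff n a m * poly (Q a) ?t else 0) = 0"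
    by (rule sum.neutral) (use assms in auto)
  ultimately show ?thesis
    using normal_sum_coeff_sum_eq_zero[of m "m + c"] assms by simp
qed

lemma normal_sum_f_roots:
  assumes "0 < a" "a \<le> m" "m \<le> n"
  shows "poly (Q a) (h_eigenvalue n m) = 0"
proof -
  let ?t = "h_eigenvalue n m :: 'k"
  have "(\<Sum>c\<le>n. if m + c \<le> n \<and> m - a = m + c then poly (P c) ?t else 0) = 0"
    by (rule sum.neutral) (use assms in auto)
  moreover have "(\<Sum>a'\<le>n. if a' \<le> m \<and> m - a = m - a' then f_pow_coeff n a' m * poly (Q a') ?t else 0) =
      f_pow_coeff n a m * poly (Q a) ?t"
    by (rule sum_if_unique) (use assms in auto)
  moreover have "f_pow_coeff n a m \<noteq> (0::'k)"
    using assms by (intro f_pow_coeff_nonzero) auto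
  ultimately show ?thesis
    using normal_sum_coeff_sum_eq_zero[of m "m - a"] assms by simp
qed

lemma normal_sum_h_roots:
  assumes "m \<le> n"
  shows "poly (P 0 + Q 0) (h_eigenvalue n m) = 0"
proof -
  let ?t = "h_eigenvalue n m :: 'k"
  have "(\<Sum>c\<le>n. if m + c \<le> n \<and> m = m + c then poly (P c) ?t else 0) = poly (P 0) ?t"
    by (rule sum_if_unique) (use assms in auto)
  moreover have "(\<Sum>a\<le>n. if a \<le> m \<and> m = m - a then f_pow_coeff n a m * poly (Q a) ?t else 0) =
      f_pow_coeff n 0 m * poly (Q 0) ?t"
    by (rule sum_if_unique) (use assms in auto)
  ultimately show ?thesis
    using normal_sum_coeff_sum_eq_zero[OF assms, of m] by (simp add: f_pow_coeff_def)
qed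

lemma normal_sum_in_rel_ideal: "normal_sum n P Q \<in> rel_ideal n"
proof -
  have e_terms: "gen_e ^ c * hpoly (P c) \<in> rel_ideal n" if "0 < c" "c \<le> n" for c
  proof -
    have "eigen_poly n {..<Suc n - c} dvd P c"
      by (rule eigen_poly_dvd) (use that normal_sum_e_roots in auto)
    then obtain q where "P c = eigen_poly n {..<Suc n - c} * q" ..
    then show ?thesis
      using rel_ideal_mult_right[OF e_pow_eigen_poly_in_rel_ideal, of c n "hpoly q"] that
      by (simp add: hpoly_mult mult.assoc)
  qed
  have f_terms: "gen_f ^ a * hpoly (Q a) \<in> rel_ideal n" if "0 < a" "a \<le> n" for a
  proof -
    have "eigen_poly n {a..n} dvd Q a"
      by (rule eigen_poly_dvd) (use that normal_sum_f_roots in auto)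
    then obtain q where "Q a = eigen_poly n {a..n} * q" ..
    then show ?thesis
      using rel_ideal_mult_right[OF f_pow_eigen_poly_in_rel_ideal, of a n "hpoly q"] that
      by (simp add: hpoly_mult mult.assoc)
  qed
  have h_term: "hpoly (P 0 + Q 0) \<in> rel_ideal n"
  proof -
    have "eigen_poly n {..<Suc n} dvd P 0 + Q 0"
      by (rule eigen_poly_dvd) (use normal_sum_h_roots in auto)
    then obtain q where "P 0 + Q 0 = eigen_poly n {..<Suc n} * q" ..
    then show ?thesis
      using rel_ideal_mult_right[OF e_pow_eigen_poly_in_rel_ideal, of 0 n "hpoly q"]
      by (simp add: hpoly_mult)
  qed
  have "normal_sum n P Q = hpoly (P 0 + Q 0) + (\<Sum>c\<in>{1..n}. gen_e ^ c * hpoly (P c)) +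
      (\<Sum>a\<in>{1..n}. gen_f ^ a * hpoly (Q a))"
    unfolding normal_sum_def atMost_atLeast0 by (simp add: sum.atLeast_Suc_atMost hpoly_add algebra_simps)
  also have "\<dots> \<in> rel_ideal n"
    by (intro rel_ideal_add rel_ideal_sum h_term e_terms f_terms) auto
  finally show ?thesis .
qed

end

theorem eval_op_eq_zero_iff: "eval_op n x = (\<lambda>_. 0 :: 'k::field_char_0 poly) \<longleftrightarrow> x \<in> rel_ideal n"
proof
  assume zero: "eval_op n x = (\<lambda>_. 0)"
  obtain P Q where cong: "rel_cong n x (normal_sum n P Q)"
    using has_normal_form unfolding has_normal_form_def by blast
  then have "eval_op n (x - normal_sum n P Q) = (\<lambda>_. 0 :: 'k poly)"
    by (simp add: rel_cong_def rel_ideal_eval_op_zero)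
  with zero have "eval_op n (normal_sum n P Q) = (\<lambda>_. 0 :: 'k poly)"
    by (simp add: eval_op_diff fun_eq_iff)
  then have "normal_sum n P Q \<in> rel_ideal n"
    by (rule normal_sum_in_rel_ideal)
  then show "x \<in> rel_ideal n"
    using rel_cong_rel_ideal[OF rel_cong_sym[OF cong]] by blast
qed (rule rel_ideal_eval_op_zero)

section \<open>Surjectivity\<close>

definition matrix_unit_elt :: "nat \<Rightarrow> nat \<Rightarrow> nat \<Rightarrow> 'k::comm_ring_1 freealg" where
  "matrix_unit_elt n i j = gen_e ^ i * gen_f ^ n * gen_e ^ n * gen_f ^ j"

lemma eval_op_matrix_unit_elt:
  assumes "i \<le> n" "j \<le> n" "m \<le> n"
  shows "eval_op n (matrix_unit_elt n i j) (monom 1 m) =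
    (if m = j then monom (f_pow_coeff n n n * f_pow_coeff n j j) i else (0::'k::field poly))"
proof (cases "j \<le> m")
  case True
  then have "eval_op n (matrix_unit_elt n i j) (monom 1 m) =
      eval_op n (gen_e ^ i) (eval_op n (gen_f ^ n) (eval_op n (gen_e ^ n) (monom (f_pow_coeff n j m) (m - j))))"
    using assms by (simp add: matrix_unit_elt_def eval_op_mult eval_op_f_pow_monom)
  also have "\<dots> = (if m = j then monom (f_pow_coeff n n n * f_pow_coeff n j j) i else 0)"
    using assms True
    by (auto simp: eval_op_e_pow_monom eval_op_f_pow_monom End_zero[OF End_eval_op])
  finally show ?thesis .
next
  case False
  then show ?thesis
    using assms by (simp add: matrix_unit_elt_def eval_op_mult eval_op_f_pow_monom End_zero[OF End_eval_op])
qed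

theorem eval_op_surj:
  assumes \<delta>: "is_End n \<delta>"
  shows "\<exists>x. eval_op n x = (\<delta> :: 'k::field_char_0 poly \<Rightarrow> _)"
proof -
  define K :: "nat \<Rightarrow> 'k" where "K j = f_pow_coeff n n n * f_pow_coeff n j j" for j
  have K: "K j \<noteq> 0" if "j \<le> n" for j
    using that f_pow_coeff_nonzero[of n n n] f_pow_coeff_nonzero[of j j n] by (simp add: K_def)
  define x :: "'k freealg" where
    "x = (\<Sum>i\<le>n. \<Sum>j\<le>n. scalar (coeff (\<delta> (monom 1 j)) i / K j) * matrix_unit_elt n i j)"
  have "eval_op n x = \<delta>"
  proof (rule End_eqI[OF End_eval_op \<delta>])
    fix m assume m: "m \<le> n"
    have "eval_op n x (monom 1 m) = (\<Sum>i\<le>n. \<Sum>j\<le>n.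
        smult (coeff (\<delta> (monom 1 j)) i / K j) (eval_op n (matrix_unit_elt n i j) (monom 1 m)))"
      by (simp add: x_def eval_op_sum eval_op_scalar_mult)
    also have "\<dots> = (\<Sum>i\<le>n. \<Sum>j\<le>n. if j = m then monom (coeff (\<delta> (monom 1 m)) i) i else 0)"
      using m K by (intro sum.cong refl) (auto simp: eval_op_matrix_unit_elt smult_monom K_def)
    also have "\<dots> = \<delta> (monom 1 m)"
      using m End_On[OF \<delta>, of "monom 1 m"] by (simp add: poly_as_sum_of_monoms' On_iff)
    finally show "eval_op n x (monom 1 m) = \<delta> (monom 1 m)" .
  qed
  then show ?thesis by blast
qed

section \<open>The order filtration\<close>

lemma End_Lmul: "is_End n (Lmul n f :: 'k::field poly \<Rightarrow> _)"
proof (rule is_EndI)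
  fix p q :: "'k poly" assume "p \<in> On n" "q \<in> On n"
  then show "Lmul n f (p + q) = Lmul n f p + Lmul n f q"
    by (simp add: Lmul_def restr_def omult_def distrib_left poly_mod_add_left)
next
  fix c and p :: "'k poly" assume "p \<in> On n"
  then show "Lmul n f (smult c p) = smult c (Lmul n f p)"
    by (simp add: Lmul_def restr_def omult_def mod_smult_left)
qed (auto simp: Lmul_out)

lemma Lmul_Lmul: "p \<in> On n \<Longrightarrow> Lmul n f (Lmul n g p) = Lmul n (f * g) (p :: 'k::field poly)"
  using On_omult[of n g p] by (simp add: Lmul_def restr_def omult_def mod_mult_right_eq mult.assoc)

lemma Lmul_commute: "Lmul n f (Lmul n g p) = Lmul n g (Lmul n f (p :: 'k::field poly))"
  by (cases "p \<in> On n") (simp_all add: Lmul_Lmul mult.commute Lmul_out)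

lemma Lmul_add_left: "Lmul n (f + g) p = Lmul n f p + Lmul n g (p :: 'k::field poly)"
  by (simp add: Lmul_def restr_def omult_def distrib_right poly_mod_add_left)

lemma Lmul_const: "p \<in> On n \<Longrightarrow> Lmul n [:a:] p = smult a (p :: 'k::field poly)"
proof -
  assume p: "p \<in> On n"
  have "degree (smult a p) < degree (monom (1::'k) (Suc n))"
    using p by (simp add: degree_monom_eq On_iff le_less_trans[OF degree_smult_le])
  then show ?thesis using p by (simp add: Lmul_def restr_def omult_def mod_poly_less)
qed

lemma Lmul_pCons: "p \<in> On n \<Longrightarrow> Lmul n (pCons a g) p = smult a p + Xop n (Lmul n g (p :: 'k::field poly))"
proof -
  assume p: "p \<in> On n"
  have "pCons a g = [:a:] + [:0, 1:] * g" by simp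
  then have "Lmul n (pCons a g) p = Lmul n [:a:] p + Lmul n ([:0, 1:] * g) p"
    by (simp only: Lmul_add_left)
  also have "\<dots> = smult a p + Xop n (Lmul n g p)"
    using p by (simp add: Lmul_const Xop_def Lmul_Lmul)
  finally show ?thesis .
qed

lemma End_Xop: "is_End n (Xop n :: 'k::field poly \<Rightarrow> _)"
  by (simp add: Xop_def End_Lmul)

lemma Xop_Lmul_commute: "Xop n (Lmul n f p) = Lmul n f (Xop n (p :: 'k::field poly))"
  by (simp add: Xop_def Lmul_commute)

lemma End_comm: "is_End n A \<Longrightarrow> is_End n B \<Longrightarrow> is_End n (comm A (B :: 'k::field poly \<Rightarrow> _))"
  unfolding comm_def
  by (rule is_EndI) (auto simp: End_On End_add End_smult End_out End_zero algebra_simps smult_diff_right)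

lemma comm_zero: "is_End n A \<Longrightarrow> comm A (\<lambda>_. 0) = (\<lambda>_. 0 :: 'k::field poly)"
  by (simp add: comm_def End_zero fun_eq_iff)

lemma comm_plus: "is_End n L \<Longrightarrow> is_End n A \<Longrightarrow> is_End n B \<Longrightarrow>
   comm L (\<lambda>p. A p + B p) = (\<lambda>p. comm L A p + comm L (B :: 'k::field poly \<Rightarrow> _) p)"
  by (simp add: comm_def fun_eq_iff End_add End_On)

lemma comm_comp: "is_End n L \<Longrightarrow> is_End n A \<Longrightarrow> is_End n B \<Longrightarrow>
   comm L (\<lambda>p. A (B p)) = (\<lambda>p. comm L A (B p) + A (comm L (B :: 'k::field poly \<Rightarrow> _) p))"
  by (simp add: comm_def fun_eq_iff End_diff End_On)

lemma comm_Lmul_Lmul: "comm (Lmul n f) (Lmul n g) = (\<lambda>_. 0 :: 'k::field poly)"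
  by (simp add: comm_def fun_eq_iff Lmul_commute)

lemma comm_comm_swap:
  assumes X: "is_End n X" and Y: "is_End n Y" and \<delta>: "is_End n \<delta>"
    and c: "\<And>p. X (Y p) = Y (X p)"
  shows "comm X (comm Y \<delta>) = comm Y (comm X (\<delta> :: 'k::field poly \<Rightarrow> _))"
proof
  fix p
  show "comm X (comm Y \<delta>) p = comm Y (comm X \<delta>) p"
    unfolding comm_def
    by (simp add: End_diff[OF X] End_diff[OF Y] End_On[OF \<delta>] End_On[OF X] End_On[OF Y] c)
qed

lemma comm_Lmul_eq_zero_if_comm_Xop:
  assumes \<delta>: "is_End n \<delta>" and x: "comm (Xop n) \<delta> = (\<lambda>_. 0 :: 'k::field poly)"
  shows "comm (Lmul n g) \<delta> = (\<lambda>_. 0)"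
proof
  fix p :: "'k poly"
  have xc: "Xop n (\<delta> q) = \<delta> (Xop n q)" for q
    using fun_cong[OF x, of q] by (simp add: comm_def)
  show "comm (Lmul n g) \<delta> p = 0"
  proof (cases "p \<in> On n")
    case False
    then show ?thesis by (simp add: comm_def End_out[OF \<delta>] Lmul_out End_zero[OF \<delta>])
  next
    case True
    have "Lmul n g (\<delta> p) = \<delta> (Lmul n g p)"
    proof (induction g rule: pCons_induct)
      case 0
      then show ?case using True by (simp add: Lmul_def restr_def omult_def End_zero[OF \<delta>])
    next
      case (pCons a g)
      have "Lmul n (pCons a g) (\<delta> p) = smult a (\<delta> p) + Xop n (Lmul n g (\<delta> p))"
        by (rule Lmul_pCons[OF End_On[OF \<delta>]])
      also have "\<dots> = smult a (\<delta> p) + \<delta> (Xop n (Lmul n g p))"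
        by (simp add: pCons.IH xc)
      also have "\<dots> = \<delta> (smult a p + Xop n (Lmul n g p))"
        using True by (simp add: End_add[OF \<delta>] End_smult[OF \<delta>])
      also have "\<dots> = \<delta> (Lmul n (pCons a g) p)"
        using True by (simp add: Lmul_pCons)
      finally show ?case .
    qed
    then show ?thesis by (simp add: comm_def)
  qed
qed

lemma End_iter_comm: "is_End n \<delta> \<Longrightarrow> is_End n (iter_comm n fs (\<delta> :: 'k::field poly \<Rightarrow> _))"
  by (induction fs) (simp_all add: End_comm End_Lmul)

lemma iter_comm_zero: "iter_comm n fs (\<lambda>_. 0) = (\<lambda>_. 0 :: 'k::field poly)"
  by (induction fs) (simp_all add: comm_zero[OF End_Lmul])

lemma iter_comm_plus:
  assumes A: "is_End n A" and B: "is_End n B"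
  shows "iter_comm n fs (\<lambda>p. A p + B p) = (\<lambda>p. iter_comm n fs A p + iter_comm n fs (B :: 'k::field poly \<Rightarrow> _) p)"
proof (induction fs)
  case Nil
  then show ?case by simp
next
  case (Cons f fs)
  then show ?case
    using comm_plus[OF End_Lmul End_iter_comm[OF A] End_iter_comm[OF B], of f fs fs] by simp
qed

lemma iter_comm_snoc: "iter_comm n (fs @ [f]) \<delta> = iter_comm n fs (comm (Lmul n f) \<delta>)"
  by (induction fs) simp_all

definition order_le :: "nat \<Rightarrow> nat \<Rightarrow> ('k::field poly \<Rightarrow> 'k poly) \<Rightarrow> bool" where
  "order_le n p \<delta> \<longleftrightarrow> (\<forall>fs. length fs = Suc p \<longrightarrow> set fs \<subseteq> On n \<longrightarrow> iter_comm n fs \<delta> = (\<lambda>_. 0))"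

lemma in_Diff_iff: "\<delta> \<in> Diff n p \<longleftrightarrow> is_End n \<delta> \<and> order_le n p \<delta>"
  by (simp add: Diff_def order_le_def)

lemma order_le_0_iff: "order_le n 0 (\<delta> :: 'k::field poly \<Rightarrow> _) \<longleftrightarrow> (\<forall>f\<in>On n. comm (Lmul n f) \<delta> = (\<lambda>_. 0))"
proof
  assume "order_le n 0 \<delta>"
  then show "\<forall>f\<in>On n. comm (Lmul n f) \<delta> = (\<lambda>_. 0)"
    unfolding order_le_def by (metis (no_types, lifting) One_nat_def empty_subsetI insert_subset
        iter_comm.simps length_Cons list.set(1,2) list.size(3))
next
  assume *: "\<forall>f\<in>On n. comm (Lmul n f) \<delta> = (\<lambda>_. 0)"
  show "order_le n 0 \<delta>" unfolding order_le_def
  proof (intro allI impI)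
    fix fs :: "'k poly list" assume "length fs = Suc 0" "set fs \<subseteq> On n"
    then obtain f where "fs = [f]" "f \<in> On n" by (cases fs) auto
    then show "iter_comm n fs \<delta> = (\<lambda>_. 0)" using * by simp
  qed
qed

lemma order_le_Suc_iff: "order_le n (Suc p) (\<delta> :: 'k::field poly \<Rightarrow> _) \<longleftrightarrow> (\<forall>f\<in>On n. order_le n p (comm (Lmul n f) \<delta>))"
proof
  assume *: "order_le n (Suc p) \<delta>"
  show "\<forall>f\<in>On n. order_le n p (comm (Lmul n f) \<delta>)"
  proof (intro ballI)
    fix f :: "'k poly" assume f: "f \<in> On n"
    show "order_le n p (comm (Lmul n f) \<delta>)" unfolding order_le_def
    proof (intro allI impI)
      fix fs :: "'k poly list" assume "length fs = Suc p" "set fs \<subseteq> On n"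
      then show "iter_comm n fs (comm (Lmul n f) \<delta>) = (\<lambda>_. 0)"
        using * f unfolding order_le_def by (metis iter_comm_snoc length_append_singleton set_append
            Un_subset_iff empty_subsetI insert_subset list.set(1,2))
    qed
  qed
next
  assume *: "\<forall>f\<in>On n. order_le n p (comm (Lmul n f) \<delta>)"
  show "order_le n (Suc p) \<delta>" unfolding order_le_def
  proof (intro allI impI)
    fix fs :: "'k poly list" assume l: "length fs = Suc (Suc p)" and s: "set fs \<subseteq> On n"
    then obtain gs f where fs: "fs = gs @ [f]" by (metis length_Suc_conv rev_exhaust list.distinct(1))
    then have "length gs = Suc p" "set gs \<subseteq> On n" "f \<in> On n" using l s by auto
    then show "iter_comm n fs \<delta> = (\<lambda>_. 0)"
      using * unfolding fs iter_comm_snoc order_le_def by blast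
  qed
qed

lemma order_le_zero: "order_le n p (\<lambda>_. 0 :: 'k::field poly)"
  by (simp add: order_le_def iter_comm_zero)

lemma order_le_plus: "is_End n A \<Longrightarrow> is_End n B \<Longrightarrow> order_le n p A \<Longrightarrow> order_le n p B \<Longrightarrow>
   order_le n p (\<lambda>x. A x + (B x :: 'k::field poly))"
  unfolding order_le_def by (simp add: iter_comm_plus)

lemma order_le_Suc_mono: "order_le n p \<delta> \<Longrightarrow> order_le n (Suc p) (\<delta> :: 'k::field poly \<Rightarrow> _)"
proof (induction p arbitrary: \<delta>)
  case 0
  then show ?case by (simp add: order_le_Suc_iff order_le_0_iff order_le_zero)
next
  case (Suc p)
  then show ?case by (metis order_le_Suc_iff)
qed

lemma order_le_mono: "order_le n p \<delta> \<Longrightarrow> p \<le> q \<Longrightarrow> order_le n q (\<delta> :: 'k::field poly \<Rightarrow> _)"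
proof (induction q)
  case 0
  then show ?case by simp
next
  case (Suc q)
  then show ?case by (metis le_Suc_eq order_le_Suc_mono)
qed

lemma order_le_comp:
  assumes "is_End n A" "is_End n B" "order_le n p A" "order_le n q B"
  shows "order_le n (p + q) (\<lambda>x. A (B x) :: 'k::field poly)"
  using assms
proof (induction "p + q" arbitrary: p q A B)
  case 0
  then have p: "p = 0" "q = 0" by auto
  show ?case unfolding p add_0 order_le_0_iff
  proof
    fix f :: "'k poly" assume f: "f \<in> On n"
    have "comm (Lmul n f) A = (\<lambda>_. 0)" "comm (Lmul n f) B = (\<lambda>_. 0)"
      using "0.prems" f p by (simp_all add: order_le_0_iff)
    then show "comm (Lmul n f) (\<lambda>x. A (B x)) = (\<lambda>_. 0)"
      using comm_comp[OF End_Lmul "0.prems"(1,2), of f] by (simp add: End_zero[OF "0.prems"(1)])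
  qed
next
  case (Suc M)
  show ?case unfolding Suc.hyps(2)[symmetric] order_le_Suc_iff
  proof
    fix f :: "'k poly" assume f: "f \<in> On n"
    have EL: "is_End n (Lmul n f)" by (rule End_Lmul)
    have o1: "order_le n M (\<lambda>x. comm (Lmul n f) A (B x))"
    proof (cases p)
      case 0
      then have "comm (Lmul n f) A = (\<lambda>_. 0)" using Suc.prems f by (simp add: order_le_0_iff)
      then show ?thesis by (simp add: order_le_zero)
    next
      case (Suc p')
      then have "order_le n p' (comm (Lmul n f) A)" using \<open>order_le n p A\<close> f order_le_Suc_iff by blast
      moreover have "M = p' + q" using Suc \<open>Suc M = p + q\<close> by simp
      ultimately show ?thesis
        using Suc.hyps(1)[of p' q "comm (Lmul n f) A" B] End_comm[OF EL \<open>is_End n A\<close>] \<open>is_End n B\<close>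
          \<open>order_le n q B\<close> by simp
    qed
    have o2: "order_le n M (\<lambda>x. A (comm (Lmul n f) B x))"
    proof (cases q)
      case 0
      then have "comm (Lmul n f) B = (\<lambda>_. 0)" using Suc.prems f by (simp add: order_le_0_iff)
      then show ?thesis using End_zero[OF \<open>is_End n A\<close>] by (simp add: order_le_zero)
    next
      case (Suc q')
      then have "order_le n q' (comm (Lmul n f) B)" using \<open>order_le n q B\<close> f order_le_Suc_iff by blast
      moreover have "M = p + q'" using Suc \<open>Suc M = p + q\<close> by simp
      ultimately show ?thesis
        using Suc.hyps(1)[of p q' A "comm (Lmul n f) B"] End_comm[OF EL \<open>is_End n B\<close>] \<open>is_End n A\<close>
          \<open>order_le n p A\<close> by simp
    qed
    have "order_le n M (\<lambda>x. comm (Lmul n f) A (B x) + A (comm (Lmul n f) B x))"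
      by (rule order_le_plus[OF _ _ o1 o2])
         (auto intro: End_comp End_comm EL Suc.prems)
    then show "order_le n M (comm (Lmul n f) (\<lambda>x. A (B x)))"
      by (simp add: comm_comp[OF EL Suc.prems(1,2)])
  qed
qed

lemma eval_op_relator_apply:
  "r \<in> relators n \<Longrightarrow> eval_op n r p = (0 :: 'k::field poly)"
  by (simp add: eval_op_relators)

lemma comm_Xop_H: "comm (Xop n) (gen_op n H) = (\<lambda>p. - smult 2 (Xop n (p :: 'k::field poly)))"
proof
  fix p :: "'k poly"
  have "eval_op n (gen_h * gen_e - gen_e * gen_h - scalar 2 * gen_e) p = 0"
    by (rule eval_op_relator_apply) (simp add: relators_def scalar_numeral)
  then have "gen_op n H (gen_op n E p) - gen_op n E (gen_op n H p) - smult 2 (gen_op n E p) = 0"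
    by (simp add: eval_op_diff eval_op_mult eval_op_scalar Idn_in eval_op_gen_e eval_op_gen_h
        del: gen_op.simps)
  then show "comm (Xop n) (gen_op n H) p = - smult 2 (Xop n p)"
    by (simp add: comm_def algebra_simps del: gen_op.simps) (simp add: algebra_simps)
qed

lemma comm_Xop_F: "comm (Xop n) (gen_op n F) = (gen_op n H :: 'k::field poly \<Rightarrow> _)"
proof
  fix p :: "'k poly"
  have "eval_op n (gen_e * gen_f - gen_f * gen_e - gen_h) p = 0"
    by (rule eval_op_relator_apply) (simp add: relators_def)
  then have "gen_op n E (gen_op n F p) - gen_op n F (gen_op n E p) - gen_op n H p = 0"
    by (simp only: eval_op_diff eval_op_mult eval_op_gen_e eval_op_gen_f eval_op_gen_h)
  then show "comm (Xop n) (gen_op n F) p = gen_op n H p"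
    by (simp add: comm_def del: gen_op.simps) (simp add: algebra_simps)
qed

lemma comm_comm_gen_op_H: "comm (Lmul n g) (comm (Lmul n f) (gen_op n H)) = (\<lambda>_. 0 :: 'k::field poly)"
proof (rule comm_Lmul_eq_zero_if_comm_Xop)
  have EH: "is_End n (gen_op n H :: 'k poly \<Rightarrow> _)" by (rule End_gen_op)
  show "is_End n (comm (Lmul n f) (gen_op n H :: 'k poly \<Rightarrow> _))" by (intro End_comm End_Lmul EH)
  have "comm (Xop n) (comm (Lmul n f) (gen_op n H)) = comm (Lmul n f) (comm (Xop n) (gen_op n H :: 'k poly \<Rightarrow> _))"
    by (rule comm_comm_swap[where X="Xop n" and Y="Lmul n f", OF End_Xop End_Lmul EH Xop_Lmul_commute])
  also have "\<dots> = (\<lambda>_. 0)"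
  proof
    fix q :: "'k poly"
    have "Lmul n f (- smult 2 (Xop n q)) = - smult 2 (Lmul n f (Xop n q))"
      by (simp add: End_uminus[OF End_Lmul] End_smult[OF End_Lmul])
    then show "comm (Lmul n f) (comm (Xop n) (gen_op n H)) q = 0"
      unfolding comm_Xop_H unfolding comm_def by (simp add: Xop_Lmul_commute)
  qed
  finally show "comm (Xop n) (comm (Lmul n f) (gen_op n H :: 'k poly \<Rightarrow> _)) = (\<lambda>_. 0)" .
qed

lemma order_le_gen_op_E: "order_le n 0 (gen_op n E :: 'k::field poly \<Rightarrow> _)"
  by (simp add: order_le_0_iff Xop_def comm_Lmul_Lmul)

lemma order_le_gen_op_H: "order_le n 1 (gen_op n H :: 'k::field poly \<Rightarrow> _)"
  by (simp add: order_le_Suc_iff order_le_0_iff comm_comm_gen_op_H del: gen_op.simps)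

lemma order_le_gen_op_F: "order_le n 2 (gen_op n F :: 'k::field poly \<Rightarrow> _)"
proof -
  have "comm (Lmul n h) (comm (Lmul n g) (comm (Lmul n f) (gen_op n F))) = (\<lambda>_. 0 :: 'k poly)" for f g h
  proof (rule comm_Lmul_eq_zero_if_comm_Xop)
    have EF: "is_End n (gen_op n F :: 'k poly \<Rightarrow> _)" by (rule End_gen_op)
    show "is_End n (comm (Lmul n g) (comm (Lmul n f) (gen_op n F :: 'k poly \<Rightarrow> _)))"
      by (intro End_comm End_Lmul EF)
    have "comm (Xop n) (comm (Lmul n g) (comm (Lmul n f) (gen_op n F :: 'k poly \<Rightarrow> _))) =
        comm (Lmul n g) (comm (Xop n) (comm (Lmul n f) (gen_op n F)))"
      by (rule comm_comm_swap[where X="Xop n" and Y="Lmul n g", OF End_Xop End_Lmul _ Xop_Lmul_commute]) (intro End_comm End_Lmul EF)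
    also have "comm (Xop n) (comm (Lmul n f) (gen_op n F :: 'k poly \<Rightarrow> _)) =
        comm (Lmul n f) (comm (Xop n) (gen_op n F))"
      by (rule comm_comm_swap[where X="Xop n" and Y="Lmul n f", OF End_Xop End_Lmul EF Xop_Lmul_commute])
    also have "comm (Xop n) (gen_op n F) = (gen_op n H :: 'k poly \<Rightarrow> _)" by (rule comm_Xop_F)
    also have "comm (Lmul n g) (comm (Lmul n f) (gen_op n H)) = (\<lambda>_. 0 :: 'k poly)" by (rule comm_comm_gen_op_H)
    finally show "comm (Xop n) (comm (Lmul n g) (comm (Lmul n f) (gen_op n F :: 'k poly \<Rightarrow> _))) = (\<lambda>_. 0)" .
  qed
  then show ?thesis by (simp add: order_le_Suc_iff order_le_0_iff numeral_2_eq_2 del: gen_op.simps)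
qed

lemma order_le_gen_op: "order_le n (gen_weight g) (gen_op n g :: 'k::field poly \<Rightarrow> _)"
  by (cases g) (simp_all only: gen_weight.simps order_le_gen_op_E order_le_gen_op_H order_le_gen_op_F)

lemma order_le_Idn: "order_le n 0 (Idn n :: 'k::field poly \<Rightarrow> _)"
  unfolding order_le_0_iff
proof (intro ballI)
  fix f :: "'k poly"
  show "comm (Lmul n f) (Idn n) = (\<lambda>_. 0)"
    by (auto simp: comm_def fun_eq_iff Idn_def restr_def Lmul_out)
qed

lemma order_le_word_op: "order_le n (weight w) (word_op n w :: 'k::field poly \<Rightarrow> _)"
proof (induction w)
  case Nil
  then show ?case by (simp add: weight_def order_le_Idn)
next
  case (Cons g w)
  have "order_le n (gen_weight g + weight w) (\<lambda>x. gen_op n g (word_op n w x) :: 'k poly)"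
    by (rule order_le_comp[OF End_gen_op End_word_op order_le_gen_op Cons.IH])
  then show ?case by (simp add: weight_def del: gen_op.simps)
qed

lemma word_op_in_Diff: "weight w \<le> p \<Longrightarrow> (word_op n w :: 'k::field poly \<Rightarrow> _) \<in> Diff n p"
  by (simp add: in_Diff_iff End_word_op order_le_mono[OF order_le_word_op])

theorem theorem2:
  fixes n :: nat
  shows "(\<forall>w p. weight w \<le> p \<longrightarrow> (word_op n w :: 'k::field_char_0 poly \<Rightarrow> 'k poly) \<in> Diff n p)
    \<and> (\<forall>\<delta> \<in> (Diff_ops n :: ('k poly \<Rightarrow> 'k poly) set). \<exists>a. fin_supp a \<and> fa_eval n a = \<delta>)
    \<and> (\<forall>a :: 'k fa. fin_supp a \<longrightarrow>
         (fa_eval n a = (\<lambda>_. 0) \<longleftrightarrow>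
          a \<in> fa_ideal (sl2_relations \<union>
                 {fa_sub casimir (fa_const (of_nat (n * (n + 2)))),
                  fa_word (replicate (Suc n) E)})))"
proof (intro conjI allI impI ballI)
  fix w p assume "weight w \<le> p"
  then show "(word_op n w :: 'k poly \<Rightarrow> 'k poly) \<in> Diff n p"
    by (rule word_op_in_Diff)
next
  fix \<delta> :: "'k poly \<Rightarrow> 'k poly" assume "\<delta> \<in> Diff_ops n"
  then have "is_End n \<delta>"
    by (auto simp: Diff_ops_def Diff_def)
  then obtain x :: "'k freealg" where "eval_op n x = \<delta>"
    using eval_op_surj by blast
  then show "\<exists>a. fin_supp a \<and> fa_eval n a = \<delta>"
    using Rep_freealg[of x] by (auto simp: eval_op_def)
next
  fix a :: "'k fa" assume "fin_supp a"
  then have "a = Rep_freealg (Abs_freealg a)"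
    by (simp add: Abs_freealg_inverse)
  then show "fa_eval n a = (\<lambda>_. 0) \<longleftrightarrow> a \<in> fa_ideal (sl2_relations \<union>
      {fa_sub casimir (fa_const (of_nat (n * (n + 2)))), fa_word (replicate (Suc n) E)})"
    using eval_op_eq_zero_iff[of n "Abs_freealg a"]
    by (simp add: eval_op_def rel_ideal_def Rep_relators)
qed

end
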